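(* Let $X=\{x_1,\dots,x_n\}$ and $Z=\{z_1,\dots,z_n\}$ be sets with symmetric non-negative functions $d_X$, $d_Z$, and let $f_\bullet\colon X\to Z$ be the bijection $x_i\mapsto z_i$. For $\delta\in\mathbb{R}^+$ let $X^\delta$ be the set $X$ with the function $d_{X^\delta}(x,x')=d_X(x,x')+\delta$. If $\delta\in\mathbb{R}^+$ is big enough, then the maps $f^\delta_r\colon H_0(\mathrm{VR}_r(X^\delta))\to H_0(\mathrm{VR}_r(Z))$, $[x]\mapsto[f_\bullet(x)]$ ($r\in\mathbb{R}^+$), are well defined and form a persistence morphism $f^\delta\colon \mathrm{PH}_0(X^\delta)\to\mathrm{PH}_0(Z)$, and $f^\delta$ is isomorphic to \[ \Big(\bigoplus_{b\in\mathbb{R}^+}\bigoplus_{a\ge b}\bigoplus_{i=1}^{\mathcal{M}^0_{f^\delta}(a,b)}(\kappa^a\to\kappa^b)\Big)\oplus(\kappa^\infty\to\kappa^\infty). \]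
   Context: $\mathbb{R}^+=[0,\infty)$. For a finite set $Y=\{y_1,\dots,y_n\}$ with a symmetric non-negative function $d_Y$ (zero values between distinct points allowed; triangle inequality not required): $\mathrm{VR}_0(Y)$ is the graph on $Y$ with no edges, and for $r>0$, $\mathrm{VR}_r(Y)$ is the graph on $Y$ with an edge $[y,y']$ ($y\ne y'$) whenever $d_Y(y,y')\le r$. $H_0(\mathrm{VR}_r(Y))$ is the $\mathbb{Z}_2$-vector space freely generated by the connected components; $[y]$ is the class of $y$. $\mathrm{PH}_0(Y)$ is the persistence module $\{H_0(\mathrm{VR}_r(Y))\}_{r\in\mathbb{R}^+}$ with structure maps $\rho_{rs}$ ($r\le s$) induced by the inclusions $\mathrm{VR}_r(Y)\subseteq\mathrm{VR}_s(Y)$. A persistence module is a family of finite-dimensional $\mathbb{Z}_2$-vector spaces $V_r$, $r\in\mathbb{R}^+$, with linear maps $V_r\to V_s$ for $r\le s$ (compatible); a persistence morphism is a family of linear maps $V_r\to U_r$ commuting with the structure maps; a persistence isomorphism is one which is an isomorphism at each $r$. Two persistence morphisms $g\colon V\to U$, $g'\colon V'\to U'$ are isomorphic if there are persistence isomorphisms $\alpha\colon V\to V'$, $\beta\colon U\to U'$ with $\beta\circ g=g'\circ\alpha$; direct sums are taken pointwise. Interval modules: for $a>0$, $\kappa^a_r=\mathbb{Z}_2$ for $r<a$ and $0$ otherwise, with structure maps the identity when both spaces are $\mathbb{Z}_2$ and zero otherwise; $\kappa^0_0=\mathbb{Z}_2$ and $\kappa^0_r=0$ for $r>0$; $\kappa^\infty_r=\mathbb{Z}_2$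 for all $r$ with identity structure maps. For $a\ge b$, $\kappa^a\to\kappa^b$ is the persistence morphism that is the identity at those $r$ where both $\kappa^a_r$ and $\kappa^b_r$ equal $\mathbb{Z}_2$, and zero otherwise; $\kappa^\infty\to\kappa^\infty$ is the identity. For $r\ge 0$, $G_r(Y)$ is the graph on $Y$ with an edge $[y,y']$ ($y\neq y'$) whenever $d_Y(y,y')\le r$. For $b\ge0$, $\ker^+_b(Y)\subseteq H_0(\mathrm{VR}_0(Y))$ is the span of all $[y]+[y']$ with $y,y'$ in the same component of $G_b(Y)$; $\ker^-_0(Y)=0$ and for $b>0$, $\ker^-_b(Y)$ is the span of all $[y]+[y']$ with $y,y'$ in the same component of $G_r(Y)$ for some $0\le r<b$. With $f^\delta_0\colon H_0(\mathrm{VR}_0(X^\delta))\to H_0(\mathrm{VR}_0(Z))$ the isomorphism $[x_i]\mapsto[z_i]$, the induced block function is \[ \mathcal{M}^0_{f^\delta}(a,b)=\dim\frac{f^\delta_0(\ker^+_a(X^\delta))\cap\ker^+_b(Z)}{f^\delta_0(\ker^-_a(X^\delta))\cap\ker^+_b(Z)+f^\delta_0(\ker^+_a(X^\delta))\cap\ker^-_b(Z)},\quad a,b\in\mathbb{R}^+. \] *)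

theory Defs
  imports Main "HOL.Real"
begin

text \<open>A Z_2-vector space freely generated by a set of generators B is modelled
  as the finite subsets of B (a subset = the sum of its elements); addition is
  symmetric difference, zero is the empty set. Every finite-dimensional
  Z_2-vector space is isomorphic to one of these.\<close>

definition vsp :: "'g set \<Rightarrow> 'g set set" where
  "vsp B = {S. finite S \<and> S \<subseteq> B}"

definition zadd :: "'g set \<Rightarrow> 'g set \<Rightarrow> 'g set" where
  "zadd S T = (S - T) \<union> (T - S)"

definition zlinear :: "'g set \<Rightarrow> 'h set \<Rightarrow> ('g set \<Rightarrow> 'h set) \<Rightarrow> bool" where
  "zlinear B C f \<longleftrightarrow> (\<forall>S\<in>vsp B. f S \<in> vsp C) \<and>
     (\<forall>S\<in>vsp B. \<forall>T\<in>vsp B. f (zadd S T) = zadd (f S) (f T))"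

definition lin_ext :: "('g \<Rightarrow> 'h) \<Rightarrow> 'g set \<Rightarrow> 'h set" where
  "lin_ext g S = {D. odd (card {C\<in>S. g C = D})}"

definition zsum :: "'g set set \<Rightarrow> 'g set" where
  "zsum F = {x. odd (card {S\<in>F. x \<in> S})}"

definition zspan :: "'g set set \<Rightarrow> 'g set set" where
  "zspan A = {zsum F | F. finite F \<and> F \<subseteq> A}"

definition zdim :: "'g set set \<Rightarrow> nat" where
  "zdim V = (LEAST k. \<exists>B. finite B \<and> B \<subseteq> V \<and> card B = k \<and> zspan B = V)"

definition subspace_sum :: "'g set set \<Rightarrow> 'g set set \<Rightarrow> 'g set set" where
  "subspace_sum U W = {zadd u w | u w. u \<in> U \<and> w \<in> W}"

definition quot_dim :: "'g set set \<Rightarrow> 'g set set \<Rightarrow> nat" where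
  "quot_dim V W = zdim V - zdim W"

text \<open>A persistence module is given by generator sets B r (V_r = vsp (B r)) and
  structure maps rho r s; only indices r \<ge> 0 matter.\<close>
definition is_pmod :: "(real \<Rightarrow> 'g set) \<Rightarrow> (real \<Rightarrow> real \<Rightarrow> 'g set \<Rightarrow> 'g set) \<Rightarrow> bool" where
  "is_pmod B \<rho> \<longleftrightarrow>
     (\<forall>r\<ge>0. finite (B r)) \<and>
     (\<forall>r s. 0 \<le> r \<and> r \<le> s \<longrightarrow> zlinear (B r) (B s) (\<rho> r s)) \<and>
     (\<forall>r\<ge>0. \<forall>S\<in>vsp (B r). \<rho> r r S = S) \<and>
     (\<forall>r s t. 0 \<le> r \<and> r \<le> s \<and> s \<le> t \<longrightarrow> (\<forall>S\<in>vsp (B r). \<rho> s t (\<rho> r s S) = \<rho> r t S))"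

definition is_pmor ::
  "(real \<Rightarrow> 'g set) \<Rightarrow> (real \<Rightarrow> real \<Rightarrow> 'g set \<Rightarrow> 'g set) \<Rightarrow>
   (real \<Rightarrow> 'h set) \<Rightarrow> (real \<Rightarrow> real \<Rightarrow> 'h set \<Rightarrow> 'h set) \<Rightarrow>
   (real \<Rightarrow> 'g set \<Rightarrow> 'h set) \<Rightarrow> bool" where
  "is_pmor B \<rho> C \<sigma> g \<longleftrightarrow>
     (\<forall>r\<ge>0. zlinear (B r) (C r) (g r)) \<and>
     (\<forall>r s. 0 \<le> r \<and> r \<le> s \<longrightarrow> (\<forall>S\<in>vsp (B r). g s (\<rho> r s S) = \<sigma> r s (g r S)))"

definition is_piso ::
  "(real \<Rightarrow> 'g set) \<Rightarrow> (real \<Rightarrow> real \<Rightarrow> 'g set \<Rightarrow> 'g set) \<Rightarrow>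
   (real \<Rightarrow> 'h set) \<Rightarrow> (real \<Rightarrow> real \<Rightarrow> 'h set \<Rightarrow> 'h set) \<Rightarrow>
   (real \<Rightarrow> 'g set \<Rightarrow> 'h set) \<Rightarrow> bool" where
  "is_piso B \<rho> C \<sigma> g \<longleftrightarrow> is_pmor B \<rho> C \<sigma> g \<and>
     (\<forall>r\<ge>0. bij_betw (g r) (vsp (B r)) (vsp (C r)))"

definition pmor_isomorphic ::
  "(real \<Rightarrow> 'g set) \<Rightarrow> (real \<Rightarrow> real \<Rightarrow> 'g set \<Rightarrow> 'g set) \<Rightarrow>
   (real \<Rightarrow> 'h set) \<Rightarrow> (real \<Rightarrow> real \<Rightarrow> 'h set \<Rightarrow> 'h set) \<Rightarrow>
   (real \<Rightarrow> 'g set \<Rightarrow> 'h set) \<Rightarrow>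
   (real \<Rightarrow> 'k set) \<Rightarrow> (real \<Rightarrow> real \<Rightarrow> 'k set \<Rightarrow> 'k set) \<Rightarrow>
   (real \<Rightarrow> 'l set) \<Rightarrow> (real \<Rightarrow> real \<Rightarrow> 'l set \<Rightarrow> 'l set) \<Rightarrow>
   (real \<Rightarrow> 'k set \<Rightarrow> 'l set) \<Rightarrow> bool" where
  "pmor_isomorphic B \<rho> C \<sigma> g B' \<rho>' C' \<sigma>' g' \<longleftrightarrow>
     (\<exists>\<alpha> \<beta>. is_piso B \<rho> B' \<rho>' \<alpha> \<and> is_piso C \<sigma> C' \<sigma>' \<beta> \<and>
        (\<forall>r\<ge>0. \<forall>S\<in>vsp (B r). \<beta> r (g r S) = g' r (\<alpha> r S)))"

text \<open>Point sets are indexed by {..<n}; d is the symmetric non-negative function.\<close>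

definition gedges :: "(nat \<Rightarrow> nat \<Rightarrow> real) \<Rightarrow> nat \<Rightarrow> real \<Rightarrow> (nat \<times> nat) set" where
  "gedges d n r = {(i, j). i < n \<and> j < n \<and> i \<noteq> j \<and> d i j \<le> r}"

definition vredges :: "(nat \<Rightarrow> nat \<Rightarrow> real) \<Rightarrow> nat \<Rightarrow> real \<Rightarrow> (nat \<times> nat) set" where
  "vredges d n r = (if r > 0 then gedges d n r else {})"

definition vrcomp :: "(nat \<Rightarrow> nat \<Rightarrow> real) \<Rightarrow> nat \<Rightarrow> real \<Rightarrow> nat \<Rightarrow> nat set" where
  "vrcomp d n r i = {j. (i, j) \<in> (vredges d n r \<union> (vredges d n r)\<inverse>)\<^sup>*}"

text \<open>Generators of H_0(VR_r(Y)): the connected components.\<close>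
definition H0gen :: "(nat \<Rightarrow> nat \<Rightarrow> real) \<Rightarrow> nat \<Rightarrow> real \<Rightarrow> nat set set" where
  "H0gen d n r = vrcomp d n r ` {..<n}"

text \<open>Induced map on H_0: [y] (component C of VR_r(Y)) \<mapsto> [y] in VR_s(Y').\<close>
definition H0map :: "(nat \<Rightarrow> nat \<Rightarrow> real) \<Rightarrow> nat \<Rightarrow> real \<Rightarrow> nat set set \<Rightarrow> nat set set" where
  "H0map d' n s = lin_ext (\<lambda>C. vrcomp d' n s (SOME i. i \<in> C))"

definition PH0rho :: "(nat \<Rightarrow> nat \<Rightarrow> real) \<Rightarrow> nat \<Rightarrow> real \<Rightarrow> real \<Rightarrow> nat set set \<Rightarrow> nat set set" where
  "PH0rho d n r s = H0map d n s"

definition gconn :: "(nat \<Rightarrow> nat \<Rightarrow> real) \<Rightarrow> nat \<Rightarrow> real \<Rightarrow> nat \<Rightarrow> nat \<Rightarrow> bool" where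
  "gconn d n r i j \<longleftrightarrow> (i, j) \<in> (gedges d n r \<union> (gedges d n r)\<inverse>)\<^sup>*"

text \<open>H_0(VR_0(Y)) is identified with vsp {..<n} via [y_i] \<mapsto> {i}; so [y_i]+[y_j] = {i,j}.\<close>
definition ker_plus :: "(nat \<Rightarrow> nat \<Rightarrow> real) \<Rightarrow> nat \<Rightarrow> real \<Rightarrow> nat set set" where
  "ker_plus d n b = zspan {{i, j} | i j. i < n \<and> j < n \<and> i \<noteq> j \<and> gconn d n b i j}"

definition ker_minus :: "(nat \<Rightarrow> nat \<Rightarrow> real) \<Rightarrow> nat \<Rightarrow> real \<Rightarrow> nat set set" where
  "ker_minus d n b = (if b = 0 then {{}} else
     zspan {{i, j} | i j r. i < n \<and> j < n \<and> i \<noteq> j \<and> 0 \<le> r \<and> r < b \<and> gconn d n r i j})"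

text \<open>Block function M^0_f(a,b); f_0 is [x_i] \<mapsto> [z_i], i.e. the identity on indices.\<close>
definition block_fun :: "(nat \<Rightarrow> nat \<Rightarrow> real) \<Rightarrow> (nat \<Rightarrow> nat \<Rightarrow> real) \<Rightarrow> nat \<Rightarrow> real \<Rightarrow> real \<Rightarrow> nat" where
  "block_fun dX dZ n a b =
     quot_dim (ker_plus dX n a \<inter> ker_plus dZ n b)
       (subspace_sum (ker_minus dX n a \<inter> ker_plus dZ n b) (ker_plus dX n a \<inter> ker_minus dZ n b))"

text \<open>kappa^a_r = Z_2 (for finite a \<ge> 0, r \<ge> 0).\<close>
definition ivl :: "real \<Rightarrow> real \<Rightarrow> bool" where
  "ivl a r \<longleftrightarrow> (if a = 0 then r = 0 else r < a)"

text \<open>Generators of the direct sum: Some (a,b,i) for the i-th copy of kappa^a \<rightarrow> kappa^b,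
  None for kappa^infty \<rightarrow> kappa^infty.\<close>
definition blk_dom :: "(real \<Rightarrow> real \<Rightarrow> nat) \<Rightarrow> real \<Rightarrow> (real \<times> real \<times> nat) option set" where
  "blk_dom M r = {Some (a, b, i) | a b i. 0 \<le> b \<and> b \<le> a \<and> i < M a b \<and> ivl a r} \<union> {None}"

definition blk_cod :: "(real \<Rightarrow> real \<Rightarrow> nat) \<Rightarrow> real \<Rightarrow> (real \<times> real \<times> nat) option set" where
  "blk_cod M r = {Some (a, b, i) | a b i. 0 \<le> b \<and> b \<le> a \<and> i < M a b \<and> ivl b r} \<union> {None}"

text \<open>Structure maps of a direct sum of interval modules: identity on summands
  nonzero at both r and s, zero otherwise.\<close>
definition blk_dom_rho :: "(real \<Rightarrow> real \<Rightarrow> nat) \<Rightarrow> real \<Rightarrow> real \<Rightarrow> (real \<times> real \<times> nat) option set \<Rightarrow> (real \<times> real \<times> nat) option set" where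
  "blk_dom_rho M r s S = S \<inter> blk_dom M s"

definition blk_cod_rho :: "(real \<Rightarrow> real \<Rightarrow> nat) \<Rightarrow> real \<Rightarrow> real \<Rightarrow> (real \<times> real \<times> nat) option set \<Rightarrow> (real \<times> real \<times> nat) option set" where
  "blk_cod_rho M r s S = S \<inter> blk_cod M s"

text \<open>The morphism: sum of the kappa^a \<rightarrow> kappa^b (identity where both are Z_2, else 0).\<close>
definition blk_mor :: "(real \<Rightarrow> real \<Rightarrow> nat) \<Rightarrow> real \<Rightarrow> (real \<times> real \<times> nat) option set \<Rightarrow> (real \<times> real \<times> nat) option set" where
  "blk_mor M r S = S \<inter> blk_cod M r"

end

(*
  Shifting d_X by a delta beyond the largest value of d_Z makes the bijection non-expansive
  (d_Z <= d_X + delta pointwise), and the decomposition holds for every non-expansive bijection.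
  Each component of VR_r(X) then lies in a component of VR_r(Z), so [x] |-> [f x] is a persistence
  morphism. Both modules are quotients of H_0(VR_0), whose vectors are the finite sets of points;
  on the even sets, the death time of a vector (the least scale at which it vanishes in H_0) is a
  non-archimedean function, for d_X as for d_Z. A basis minimising the two sums of death times
  lexicographically is adapted to both (an exchange argument), so ker^+ and ker^- are spanned by
  basis vectors and M(a,b) counts the basis vectors with death times (a,b). Together with the
  singleton {x_0}, which carries the infinite bar, coordinates in this basis identify both modules
  with sums of interval modules and the morphism with the sum of the maps kappa^a -> kappa^b.
*)

theory Submission
  imports Defs "HOL-Library.Product_Lexorder"
begin

section \<open>Vectors over Z_2\<close>

lemma zadd_iff: "x \<in> zadd A B \<longleftrightarrow> (x \<in> A) \<noteq> (x \<in> B)"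
  unfolding zadd_def by auto

lemma zadd_empty [simp]: "zadd A {} = A" "zadd {} A = A"
  unfolding zadd_def by auto

lemma zadd_self [simp]: "zadd A A = {}"
  unfolding zadd_def by auto

lemma zadd_eq_empty_iff: "zadd A B = {} \<longleftrightarrow> A = B"
  unfolding zadd_def by auto

lemma zadd_zadd_cancel [simp]: "zadd A (zadd A B) = B" "zadd (zadd A B) B = A"
  unfolding zadd_def by auto

lemma finite_zadd: "finite A \<Longrightarrow> finite B \<Longrightarrow> finite (zadd A B)"
  unfolding zadd_def by auto

lemma zadd_subset_Un: "zadd A B \<subseteq> A \<union> B"
  unfolding zadd_def by auto

lemma insert_eq_zadd: "x \<notin> S \<Longrightarrow> insert x S = zadd {x} S"
  unfolding zadd_def by auto

lemma Collect_zadd: "{x \<in> zadd A B. P x} = zadd {x \<in> A. P x} {x \<in> B. P x}"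
  unfolding zadd_def by auto

lemma image_zadd: "inj_on f (A \<union> B) \<Longrightarrow> f ` zadd A B = zadd (f ` A) (f ` B)"
  unfolding zadd_def inj_on_def by blast

lemma zadd_in_vsp: "u \<in> vsp A \<Longrightarrow> v \<in> vsp A \<Longrightarrow> zadd u v \<in> vsp A"
  unfolding vsp_def using finite_zadd[of u v] zadd_subset_Un[of u v] by auto

lemma odd_card_zadd:
  assumes "finite A" "finite B"
  shows "odd (card (zadd A B)) \<longleftrightarrow> odd (card A) \<noteq> odd (card B)"
proof -
  have "card (zadd A B) = card (A - B) + card (B - A)"
    unfolding zadd_def using assms by (intro card_Un_disjoint) auto
  moreover have "card A = card (A \<inter> B) + card (A - B)" "card B = card (A \<inter> B) + card (B - A)"
    using card_Int_Diff[OF assms(1), of B] card_Int_Diff[OF assms(2), of A] by (simp_all add: Int_commute)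
  ultimately show ?thesis
    by (simp only:) presburger
qed

lemma odd_card_Collect_zadd:
  assumes "finite A" "finite B"
  shows "odd (card {x \<in> zadd A B. P x}) \<longleftrightarrow> odd (card {x \<in> A. P x}) \<noteq> odd (card {x \<in> B. P x})"
  unfolding Collect_zadd using assms by (intro odd_card_zadd) auto

lemma zsum_empty [simp]: "zsum {} = {}"
  unfolding zsum_def by simp

lemma zsum_singleton [simp]: "zsum {x} = x"
  unfolding zsum_def by (auto simp: Collect_conv_if)

lemma zsum_zadd:
  assumes "finite F" "finite G"
  shows "zsum (zadd F G) = zadd (zsum F) (zsum G)"
  unfolding zsum_def zadd_iff[abs_def] set_eq_iff
  using odd_card_Collect_zadd[OF assms] by (auto simp: zadd_iff)

lemma zsum_insert: "finite F \<Longrightarrow> x \<notin> F \<Longrightarrow> zsum (insert x F) = zadd x (zsum F)"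
  by (subst insert_eq_zadd) (simp_all add: zsum_zadd)

lemma zsum_subset_Union: "zsum F \<subseteq> \<Union>F"
  unfolding zsum_def by (force dest: odd_card_imp_not_empty)

lemma finite_zsum: "finite F \<Longrightarrow> \<forall>S\<in>F. finite S \<Longrightarrow> finite (zsum F)"
  using zsum_subset_Union[of F] by (meson finite_Union finite_subset)

lemma zsum_in_vsp: "finite F \<Longrightarrow> F \<subseteq> vsp A \<Longrightarrow> zsum F \<in> vsp A"
  unfolding vsp_def using zsum_subset_Union[of F] by (auto dest: finite_subset)

lemma lin_ext_zadd:
  assumes "finite S" "finite T"
  shows "lin_ext g (zadd S T) = zadd (lin_ext g S) (lin_ext g T)"
  unfolding lin_ext_def set_eq_iff
  using odd_card_Collect_zadd[OF assms] by (auto simp: zadd_iff)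

lemma lin_ext_empty [simp]: "lin_ext g {} = {}"
  unfolding lin_ext_def by simp

lemma lin_ext_singleton [simp]: "lin_ext g {x} = {g x}"
  unfolding lin_ext_def by (auto simp: Collect_conv_if)

lemma lin_ext_insert: "finite S \<Longrightarrow> x \<notin> S \<Longrightarrow> lin_ext g (insert x S) = zadd {g x} (lin_ext g S)"
  by (subst insert_eq_zadd) (simp_all add: lin_ext_zadd)

lemma lin_ext_subset_image: "lin_ext g S \<subseteq> g ` S"
  unfolding lin_ext_def by (force dest: odd_card_imp_not_empty)

lemma finite_lin_ext: "finite S \<Longrightarrow> finite (lin_ext g S)"
  using lin_ext_subset_image[of g S] finite_subset by blast

lemma lin_ext_cong:
  assumes "\<And>x. x \<in> S \<Longrightarrow> g x = h x"
  shows "lin_ext g S = lin_ext h S"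
proof -
  have "{C \<in> S. g C = D} = {C \<in> S. h C = D}" for D
    using assms by auto
  then show ?thesis
    unfolding lin_ext_def by simp
qed

lemma lin_ext_lin_ext: "finite S \<Longrightarrow> lin_ext g (lin_ext h S) = lin_ext (g \<circ> h) S"
  by (induction S rule: finite_induct) (simp_all add: lin_ext_insert lin_ext_zadd finite_lin_ext)

lemma lin_ext_fixpoint: "finite S \<Longrightarrow> (\<And>x. x \<in> S \<Longrightarrow> g x = x) \<Longrightarrow> lin_ext g S = S"
  by (induction S rule: finite_induct) (simp_all add: lin_ext_insert flip: insert_eq_zadd)

lemma lin_ext_inj_on: "finite S \<Longrightarrow> inj_on g S \<Longrightarrow> lin_ext g S = g ` S"
  by (induction S rule: finite_induct) (simp_all add: lin_ext_insert flip: insert_eq_zadd)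

lemma lin_ext_pair: "i \<noteq> j \<Longrightarrow> lin_ext g {i, j} = zadd {g i} {g j}"
  by (simp add: lin_ext_insert)

section \<open>Spans, independence and bases\<close>

lemma zspan_eq_image_Pow: "finite A \<Longrightarrow> zspan A = zsum ` Pow A"
  unfolding zspan_def by (auto intro: finite_subset)

lemma finite_zspan: "finite A \<Longrightarrow> finite (zspan A)"
  by (simp add: zspan_eq_image_Pow)

lemma zspan_mono: "A \<subseteq> A' \<Longrightarrow> zspan A \<subseteq> zspan A'"
  unfolding zspan_def by auto

lemma zspan_empty: "{} \<in> zspan A"
  unfolding zspan_def by (auto intro!: exI[of _ "{}"])

lemma zspan_base: "x \<in> A \<Longrightarrow> x \<in> zspan A"
  unfolding zspan_def by (auto intro!: exI[of _ "{x}"])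

lemma zspan_zadd:
  assumes "u \<in> zspan A" "v \<in> zspan A"
  shows "zadd u v \<in> zspan A"
proof -
  obtain F G where "finite F" "F \<subseteq> A" "u = zsum F" "finite G" "G \<subseteq> A" "v = zsum G"
    using assms unfolding zspan_def by auto
  moreover have "zadd F G \<subseteq> A"
    using zadd_subset_Un[of F G] \<open>F \<subseteq> A\<close> \<open>G \<subseteq> A\<close> by blast
  ultimately have "zadd u v = zsum (zadd F G)" "finite (zadd F G)" "zadd F G \<subseteq> A"
    by (simp_all add: zsum_zadd finite_zadd)
  then show ?thesis
    unfolding zspan_def by blast
qed

lemma zspan_zsum: "finite F \<Longrightarrow> F \<subseteq> zspan A \<Longrightarrow> zsum F \<in> zspan A"
  by (induction F rule: finite_induct) (simp_all add: zspan_empty zsum_insert zspan_zadd)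

lemma zspan_subset_zspan: "A' \<subseteq> zspan A \<Longrightarrow> zspan A' \<subseteq> zspan A"
  using zspan_zsum unfolding zspan_def[of A'] by blast

lemma zspan_subset_vsp: "A \<subseteq> vsp C \<Longrightarrow> zspan A \<subseteq> vsp C"
  unfolding zspan_def using zsum_in_vsp by blast

definition zindep :: "'a set set \<Rightarrow> bool" where
  "zindep A \<longleftrightarrow> finite A \<and> (\<forall>F\<subseteq>A. F \<noteq> {} \<longrightarrow> zsum F \<noteq> {})"

lemma zindep_inj_on_zsum:
  assumes "zindep A"
  shows "inj_on zsum (Pow A)"
proof (rule inj_onI)
  fix F G
  assume FG: "F \<in> Pow A" "G \<in> Pow A" "zsum F = zsum G"
  then have "finite F" "finite G"
    using assms unfolding zindep_def by (auto dest: finite_subset)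
  then have "zsum (zadd F G) = {}"
    using FG by (simp add: zsum_zadd)
  moreover have "zadd F G \<subseteq> A"
    using FG zadd_subset_Un[of F G] by blast
  ultimately have "zadd F G = {}"
    using assms unfolding zindep_def by blast
  then show "F = G"
    by (simp add: zadd_eq_empty_iff)
qed

lemma zindep_zsum_eq: "zindep A \<Longrightarrow> F \<subseteq> A \<Longrightarrow> G \<subseteq> A \<Longrightarrow> zsum F = zsum G \<Longrightarrow> F = G"
  using zindep_inj_on_zsum unfolding inj_on_def by blast

lemma zindep_subset: "zindep A \<Longrightarrow> A' \<subseteq> A \<Longrightarrow> zindep A'"
  unfolding zindep_def by (meson finite_subset subset_trans)

lemma zindep_insert:
  assumes "zindep A" "x \<notin> zspan A"
  shows "zindep (insert x A)"
  unfolding zindep_def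
proof (intro conjI allI impI)
  show "finite (insert x A)"
    using assms unfolding zindep_def by simp
next
  fix F
  assume F: "F \<subseteq> insert x A" "F \<noteq> {}"
  show "zsum F \<noteq> {}"
  proof (cases "x \<in> F")
    case False
    then show ?thesis
      using F assms(1) unfolding zindep_def by blast
  next
    case True
    have "F - {x} \<subseteq> A" "finite (F - {x})"
      using F assms(1) unfolding zindep_def by (auto dest: finite_subset)
    then have "zsum (F - {x}) \<in> zspan A" and "zsum F = zadd x (zsum (F - {x}))"
      using True zsum_insert[of "F - {x}" x] by (auto simp: zspan_def insert_absorb)
    then show ?thesis
      using assms(2) zadd_eq_empty_iff by metis
  qed
qed

lemma zsum_in_zspan_iff:
  assumes "zindep B" "F \<subseteq> B" "P \<subseteq> B"
  shows "zsum F \<in> zspan P \<longleftrightarrow> F \<subseteq> P"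
proof
  have "finite P"
    using assms(1,3) finite_subset unfolding zindep_def by blast
  moreover assume "zsum F \<in> zspan P"
  ultimately obtain G where "G \<subseteq> P" "zsum F = zsum G"
    by (auto simp: zspan_eq_image_Pow)
  then show "F \<subseteq> P"
    using zindep_zsum_eq[OF assms(1,2), of G] assms(3) by blast
next
  assume "F \<subseteq> P"
  moreover have "finite F"
    using assms(1,2) finite_subset unfolding zindep_def by blast
  ultimately show "zsum F \<in> zspan P"
    unfolding zspan_def by blast
qed

lemma card_zspan:
  assumes "zindep A"
  shows "card (zspan A) = 2 ^ card A"
  using assms zindep_inj_on_zsum[OF assms] unfolding zindep_def
  by (simp add: zspan_eq_image_Pow card_image card_Pow)

lemma card_zspan_le: "finite A \<Longrightarrow> card (zspan A) \<le> 2 ^ card A"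
  using card_image_le[of "Pow A" zsum] by (simp add: zspan_eq_image_Pow card_Pow)

lemma zdim_zspan:
  assumes "zindep A"
  shows "zdim (zspan A) = card A"
  unfolding zdim_def
proof (rule Least_equality)
  show "\<exists>B. finite B \<and> B \<subseteq> zspan A \<and> card B = card A \<and> zspan B = zspan A"
    using assms zspan_base unfolding zindep_def by blast
next
  fix k
  assume "\<exists>B. finite B \<and> B \<subseteq> zspan A \<and> card B = k \<and> zspan B = zspan A"
  then obtain B where "finite B" "card B = k" "zspan B = zspan A"
    by auto
  then have "(2::nat) ^ card A \<le> 2 ^ k"
    using card_zspan[OF assms] card_zspan_le[of B] by simp
  then show "card A \<le> k"
    by simp
qed

lemma zspan_Int:
  assumes "zindep B" "P \<subseteq> B" "Q \<subseteq> B"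
  shows "zspan P \<inter> zspan Q = zspan (P \<inter> Q)"
proof
  have fin: "finite P" "finite Q"
    using assms unfolding zindep_def by (auto dest: finite_subset)
  show "zspan P \<inter> zspan Q \<subseteq> zspan (P \<inter> Q)"
  proof
    fix v
    assume "v \<in> zspan P \<inter> zspan Q"
    then obtain F G where "F \<subseteq> P" "G \<subseteq> Q" "v = zsum F" "v = zsum G"
      using fin by (auto simp: zspan_eq_image_Pow)
    then have "F = G"
      using zindep_zsum_eq[OF assms(1), of F G] assms by blast
    then show "v \<in> zspan (P \<inter> Q)"
      using \<open>F \<subseteq> P\<close> \<open>G \<subseteq> Q\<close> \<open>v = zsum F\<close> fin
      by (auto simp: zspan_eq_image_Pow)
  qed
  show "zspan (P \<inter> Q) \<subseteq> zspan P \<inter> zspan Q"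
    by (simp add: zspan_mono)
qed

lemma subspace_sum_zspan:
  assumes "finite P" "finite Q"
  shows "subspace_sum (zspan P) (zspan Q) = zspan (P \<union> Q)"
proof
  show "subspace_sum (zspan P) (zspan Q) \<subseteq> zspan (P \<union> Q)"
    unfolding subspace_sum_def
    using zspan_zadd zspan_mono[of P "P \<union> Q"] zspan_mono[of Q "P \<union> Q"] by blast
  show "zspan (P \<union> Q) \<subseteq> subspace_sum (zspan P) (zspan Q)"
  proof
    fix v
    assume "v \<in> zspan (P \<union> Q)"
    then obtain H where H: "H \<subseteq> P \<union> Q" "v = zsum H"
      using assms by (auto simp: zspan_eq_image_Pow)
    have "finite H"
      using H assms finite_subset by auto
    have "zadd (H \<inter> P) (H - P) = H"
      unfolding zadd_def by auto
    then have "v = zadd (zsum (H \<inter> P)) (zsum (H - P))"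
      using H \<open>finite H\<close> zsum_zadd[of "H \<inter> P" "H - P"] by simp
    moreover have "zsum (H \<inter> P) \<in> zspan P" "zsum (H - P) \<in> zspan Q"
      using H \<open>finite H\<close> unfolding zspan_def by auto
    ultimately show "v \<in> subspace_sum (zspan P) (zspan Q)"
      unfolding subspace_sum_def by blast
  qed
qed

lemma quot_dim_zspan:
  assumes "zindep B" "P \<subseteq> B" "Q \<subseteq> P"
  shows "quot_dim (zspan P) (zspan Q) = card (P - Q)"
proof -
  have "zindep P" "zindep Q"
    using assms zindep_subset by blast+
  then show ?thesis
    unfolding quot_dim_def zindep_def using assms(3)
    by (simp add: zdim_zspan \<open>zindep P\<close> \<open>zindep Q\<close> card_Diff_subset)
qed

definition zbasis :: "'a set set \<Rightarrow> 'a set set \<Rightarrow> bool" where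
  "zbasis V B \<longleftrightarrow> zindep B \<and> zspan B = V"

lemma zbasis_finite: "zbasis V B \<Longrightarrow> finite B"
  unfolding zbasis_def zindep_def by simp

lemma zbasis_subset: "zbasis V B \<Longrightarrow> B \<subseteq> V"
  unfolding zbasis_def using zspan_base by blast

lemma zbasis_zsum_in: "zbasis V B \<Longrightarrow> F \<subseteq> B \<Longrightarrow> zsum F \<in> V"
  unfolding zbasis_def zindep_def zspan_def by (auto dest: finite_subset)

lemma exists_zbasis: "finite A \<Longrightarrow> \<exists>B\<subseteq>A. zbasis (zspan A) B"
proof (induction A rule: finite_induct)
  case empty
  then show ?case
    by (auto simp: zbasis_def zindep_def)
next
  case (insert x A)
  then obtain B where B: "B \<subseteq> A" "zindep B" "zspan B = zspan A"
    unfolding zbasis_def by blast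
  show ?case
  proof (cases "x \<in> zspan A")
    case True
    then have "zspan (insert x A) = zspan A"
      by (intro equalityI zspan_subset_zspan zspan_mono) (auto intro: zspan_base)
    then show ?thesis
      using B unfolding zbasis_def by auto
  next
    case False
    have "A \<subseteq> zspan (insert x B)"
      using B zspan_base zspan_mono[of B "insert x B"] by blast
    then have "zspan (insert x B) = zspan (insert x A)"
      using B by (intro equalityI zspan_mono zspan_subset_zspan) (auto intro: zspan_base)
    then show ?thesis
      using B False zindep_insert[of B x] unfolding zbasis_def by (metis insert_mono)
  qed
qed

definition zcoord :: "'a set set \<Rightarrow> 'a set \<Rightarrow> 'a set set" where
  "zcoord B v = (THE F. F \<subseteq> B \<and> zsum F = v)"

lemma zcoord_zsum: "zindep B \<Longrightarrow> F \<subseteq> B \<Longrightarrow> zcoord B (zsum F) = F"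
  unfolding zcoord_def by (rule the_equality) (auto dest: zindep_zsum_eq)

lemma zcoord:
  assumes "zbasis V B" "v \<in> V"
  shows "zcoord B v \<subseteq> B" "zsum (zcoord B v) = v"
proof -
  have "v \<in> zsum ` Pow B"
    using assms zbasis_finite[OF assms(1)] unfolding zbasis_def by (simp add: zspan_eq_image_Pow)
  then obtain F where "F \<subseteq> B" "zsum F = v"
    by blast
  moreover have "zcoord B v = F"
    using assms(1) zcoord_zsum \<open>F \<subseteq> B\<close> \<open>zsum F = v\<close> unfolding zbasis_def by blast
  ultimately show "zcoord B v \<subseteq> B" "zsum (zcoord B v) = v"
    by simp_all
qed

lemma zcoord_zadd:
  assumes "zbasis V B" "u \<in> V" "v \<in> V"
  shows "zcoord B (zadd u v) = zadd (zcoord B u) (zcoord B v)"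
proof -
  have "finite (zcoord B u)" "finite (zcoord B v)"
    using zcoord(1) assms zbasis_finite finite_subset by metis+
  then have "zadd u v = zsum (zadd (zcoord B u) (zcoord B v))"
    using assms zcoord(2)[OF assms(1)] by (simp add: zsum_zadd)
  moreover have "zadd (zcoord B u) (zcoord B v) \<subseteq> B"
    using zadd_subset_Un[of "zcoord B u" "zcoord B v"] zcoord(1)[OF assms(1,2)] zcoord(1)[OF assms(1,3)]
    by blast
  ultimately show ?thesis
    using zcoord_zsum[of B "zadd (zcoord B u) (zcoord B v)"] assms(1) unfolding zbasis_def by simp
qed

lemma lin_ext_eq_empty_partner:
  assumes "lin_ext g v = {}" "x \<in> v"
  obtains y where "y \<in> v" "y \<noteq> x" "g y = g x"
proof -
  have "even (card {i \<in> v. g i = g x})"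
    using assms(1) unfolding lin_ext_def by blast
  then have "{i \<in> v. g i = g x} \<noteq> {x}"
    by auto
  then show ?thesis
    using assms(2) that by blast
qed

lemma in_zspan_pairs_if_lin_ext_eq_empty:
  assumes "finite v" "lin_ext g v = {}"
  shows "v \<in> zspan {{i, j} | i j. i \<in> v \<and> j \<in> v \<and> i \<noteq> j \<and> g i = g j}"
  using assms
proof (induction "card v" arbitrary: v rule: less_induct)
  case less
  show ?case
  proof (cases "v = {}")
    case True
    then show ?thesis
      by (simp add: zspan_empty)
  next
    case False
    then obtain x y where xy: "x \<in> v" "y \<in> v" "y \<noteq> x" "g y = g x"
      using lin_ext_eq_empty_partner[OF less.prems(2)] by blast
    have v_eq: "v = zadd {x, y} (v - {x, y})"
      unfolding zadd_def using xy by auto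
    have "lin_ext g v = zadd (lin_ext g {x, y}) (lin_ext g (v - {x, y}))"
      using less.prems(1) by (subst v_eq) (simp add: lin_ext_zadd)
    then have "lin_ext g (v - {x, y}) = {}"
      using less.prems(2) xy by (simp add: lin_ext_pair)
    moreover have "card (v - {x, y}) < card v"
      using xy less.prems(1) by (intro psubset_card_mono) auto
    ultimately have "v - {x, y} \<in> zspan {{i, j} | i j. i \<in> v - {x, y} \<and> j \<in> v - {x, y} \<and> i \<noteq> j \<and> g i = g j}"
      using less.hyps less.prems(1) by blast
    then have "v - {x, y} \<in> zspan {{i, j} | i j. i \<in> v \<and> j \<in> v \<and> i \<noteq> j \<and> g i = g j}"
      by (rule subsetD[OF zspan_mono, rotated]) blast
    moreover have "{x, y} \<in> zspan {{i, j} | i j. i \<in> v \<and> j \<in> v \<and> i \<noteq> j \<and> g i = g j}"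
      using xy by (intro zspan_base) blast
    ultimately have "zadd {x, y} (v - {x, y}) \<in> zspan {{i, j} | i j. i \<in> v \<and> j \<in> v \<and> i \<noteq> j \<and> g i = g j}"
      by (rule zspan_zadd[rotated])
    then show ?thesis
      by (simp only: v_eq[symmetric])
  qed
qed

lemma lin_ext_zsum_pairs:
  assumes "finite F" "\<forall>p\<in>F. \<exists>i j. p = {i, j} \<and> i \<noteq> j \<and> g i = g j"
  shows "lin_ext g (zsum F) = {}"
  using assms
proof (induction F rule: finite_induct)
  case (insert p F)
  obtain i j where p: "p = {i, j}" "i \<noteq> j" "g i = g j"
    using insert.prems by blast
  have "finite (zsum F)"
    using insert.prems insert.hyps(1) by (intro finite_zsum) auto
  moreover have "lin_ext g (zsum F) = {}"
    using insert.IH insert.prems by simp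
  ultimately show ?case
    using insert.hyps p by (simp add: zsum_insert lin_ext_zadd lin_ext_pair)
qed simp

section \<open>Adapted bases\<close>

definition nonarchimedean :: "'a set set \<Rightarrow> ('a set \<Rightarrow> real) \<Rightarrow> bool" where
  "nonarchimedean V f \<longleftrightarrow> (\<forall>u\<in>V. \<forall>v\<in>V. f (zadd u v) \<le> max (f u) (f v))"

definition adapted :: "('a set \<Rightarrow> real) \<Rightarrow> 'a set set \<Rightarrow> bool" where
  "adapted f B \<longleftrightarrow> (\<forall>F\<subseteq>B. \<forall>w\<in>F. f w \<le> f (zsum F))"

lemma nonarchimedean_empty_le: "nonarchimedean V f \<Longrightarrow> u \<in> V \<Longrightarrow> f {} \<le> f u"
  unfolding nonarchimedean_def by (metis max.idem zadd_self)

lemma nonarchimedean_zsum_le: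
  assumes "nonarchimedean (zspan A) f" "finite F" "F \<subseteq> zspan A" "f {} \<le> c" "\<forall>w\<in>F. f w \<le> c"
  shows "f (zsum F) \<le> c"
  using assms(2-5)
proof (induction F rule: finite_induct)
  case (insert x F)
  then have "f (zadd x (zsum F)) \<le> max (f x) (f (zsum F))"
    using assms(1) zspan_zsum[of F A] unfolding nonarchimedean_def by simp
  also have "\<dots> \<le> c"
    using insert by simp
  finally show ?case
    using insert by (simp add: zsum_insert)
qed simp

lemma nonarchimedean_zsum_less:
  assumes "nonarchimedean (zspan A) f" "finite F" "F \<subseteq> zspan A" "f {} < c" "\<forall>w\<in>F. f w < c"
  shows "f (zsum F) < c"
  using assms(2-5)
proof (induction F rule: finite_induct)
  case (insert x F)
  then have "f (zadd x (zsum F)) \<le> max (f x) (f (zsum F))"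
    using assms(1) zspan_zsum[of F A] unfolding nonarchimedean_def by simp
  also have "\<dots> < c"
    using insert by simp
  finally show ?case
    using insert by (simp add: zsum_insert)
qed simp

lemma adapted_zsum_eq_Max:
  assumes "zbasis V B" "nonarchimedean V f" "adapted f B" "F \<subseteq> B" "F \<noteq> {}"
  shows "f (zsum F) = Max (f ` F)"
proof (rule antisym)
  have fin: "finite F"
    using assms(1,4) zbasis_finite finite_subset by blast
  have V: "V = zspan B" and FV: "F \<subseteq> zspan B"
    using assms(1,4) zspan_base unfolding zbasis_def by auto
  obtain w where "w \<in> F"
    using assms(5) by blast
  then have "f {} \<le> f w"
    using nonarchimedean_empty_le[OF assms(2)] FV V by blast
  also have "f w \<le> Max (f ` F)"
    using fin \<open>w \<in> F\<close> by simp
  finally show "f (zsum F) \<le> Max (f ` F)"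
    using nonarchimedean_zsum_le[of B f F "Max (f ` F)"] assms(2) V FV fin by simp
  show "Max (f ` F) \<le> f (zsum F)"
    using assms(3-5) fin unfolding adapted_def by (auto simp: Max_le_iff)
qed

lemma zspan_adapted_sublevel:
  assumes "zbasis V B" "nonarchimedean V f" "adapted f B"
    and down: "\<And>x y. x \<le> y \<Longrightarrow> P y \<Longrightarrow> P x"
  shows "zspan {w \<in> B. P (f w)} = {v \<in> V. v = {} \<or> P (f v)}"
proof -
  have fin: "finite B"
    using assms(1) zbasis_finite by blast
  have P_zsum: "P (f (zsum F)) \<longleftrightarrow> (\<forall>w\<in>F. P (f w))" if "F \<subseteq> B" "F \<noteq> {}" for F
  proof -
    have "finite F"
      using that fin finite_subset by blast
    then have "Max (f ` F) \<in> f ` F" "\<forall>w\<in>F. f w \<le> Max (f ` F)"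
      using that by auto
    then show ?thesis
      using adapted_zsum_eq_Max[OF assms(1-3) that] down by auto
  qed
  have "{v \<in> V. v = {} \<or> P (f v)} = zsum ` {F \<in> Pow B. F = {} \<or> P (f (zsum F))}"
  proof -
    have "V = zsum ` Pow B"
      using assms(1) fin unfolding zbasis_def by (simp add: zspan_eq_image_Pow)
    moreover have "zsum F = {} \<longleftrightarrow> F = {}" if "F \<subseteq> B" for F
      using assms(1) that unfolding zbasis_def zindep_def by auto
    ultimately show ?thesis
      by auto
  qed
  also have "\<dots> = zsum ` Pow {w \<in> B. P (f w)}"
    using P_zsum by (intro image_cong) auto
  also have "\<dots> = zspan {w \<in> B. P (f w)}"
    using fin by (simp add: zspan_eq_image_Pow)
  finally show ?thesis ..
qed

lemma zsum_notin_zspan_Diff: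
  assumes "zindep B" "G \<subseteq> B" "k \<in> G"
  shows "zsum G \<notin> zspan (B - {k})"
  using zsum_in_zspan_iff[OF assms(1,2), of "B - {k}"] assms(3) by blast

lemma zbasis_exchange:
  assumes "zbasis V B" "G \<subseteq> B" "k \<in> G"
  shows "zsum G \<notin> B - {k}" "zbasis V (insert (zsum G) (B - {k}))"
proof -
  have indep: "zindep B"
    using assms(1) unfolding zbasis_def by simp
  note new = zsum_notin_zspan_Diff[OF indep assms(2,3)]
  then show "zsum G \<notin> B - {k}"
    using zspan_base[of "zsum G" "B - {k}"] by blast
  let ?B' = "insert (zsum G) (B - {k})"
  have "zindep ?B'"
    using zindep_insert[OF zindep_subset[OF indep Diff_subset] new] .
  moreover have "zspan ?B' = V"
  proof
    have "?B' \<subseteq> zspan B"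
      using zbasis_zsum_in[OF assms(1,2)] zbasis_subset[OF assms(1)] assms(1)
      unfolding zbasis_def by auto
    then show "zspan ?B' \<subseteq> V"
      using assms(1) zspan_subset_zspan unfolding zbasis_def by blast
    have "finite G"
      using assms zbasis_finite finite_subset by blast
    then have "k = zadd (zsum G) (zsum (G - {k}))"
      using zsum_insert[of "G - {k}" k] assms(3) by (simp add: insert_absorb)
    moreover have "zsum (G - {k}) \<in> zspan ?B'"
      using assms(2) zspan_base[of _ ?B'] \<open>finite G\<close> by (intro zspan_zsum) auto
    ultimately have "k \<in> zspan ?B'"
      using zspan_zadd[OF zspan_base[of "zsum G" ?B'], of "zsum (G - {k})"] by simp
    then have "B \<subseteq> zspan ?B'"
      using zspan_base[of _ ?B'] by blast
    then show "V \<subseteq> zspan ?B'"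
      using assms(1) zspan_subset_zspan[of B ?B'] unfolding zbasis_def by blast
  qed
  ultimately show "zbasis V ?B'"
    unfolding zbasis_def by simp
qed

lemma sum_zbasis_exchange:
  fixes g :: "'a set \<Rightarrow> real"
  assumes "zbasis V B" "G \<subseteq> B" "k \<in> G"
  shows "(\<Sum>w\<in>insert (zsum G) (B - {k}). g w) = (\<Sum>w\<in>B. g w) - g k + g (zsum G)"
  using zbasis_exchange(1)[OF assms] zbasis_finite[OF assms(1)] assms(2,3)
  by (simp add: sum_diff1 subsetD)

lemma adapted_if_no_lowering_exchange:
  assumes "zbasis V B" and no_exchange: "\<And>G k. G \<subseteq> B \<Longrightarrow> k \<in> G \<Longrightarrow> \<not> f (zsum G) < f k"
  shows "adapted f B"
  unfolding adapted_def
proof (intro allI impI ballI)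
  fix F w
  assume F: "F \<subseteq> B" and "w \<in> F"
  then have "finite F"
    using assms(1) zbasis_finite finite_subset by blast
  then obtain k where "k \<in> F" "Max (f ` F) = f k"
    using obtains_MAX[of F f] \<open>w \<in> F\<close> by blast
  then have "f w \<le> f k"
    using \<open>finite F\<close> \<open>w \<in> F\<close> by (metis Max_ge finite_imageI imageI)
  then show "f w \<le> f (zsum F)"
    using no_exchange[OF F \<open>k \<in> F\<close>] by linarith
qed

lemma zsum_top_level_less:
  assumes "nonarchimedean (zspan A) f" "finite F" "F \<subseteq> zspan A" "f (zsum F) < Max (f ` F)"
  shows "f (zsum {w \<in> F. f w = Max (f ` F)}) < Max (f ` F)"
proof -
  let ?m = "Max (f ` F)" and ?T = "{w \<in> F. f w = Max (f ` F)}"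
  have "zadd F (F - ?T) = ?T"
    unfolding zadd_def by auto
  then have split: "zsum ?T = zadd (zsum F) (zsum (F - ?T))"
    using assms(2) zsum_zadd[of F "F - ?T"] by simp
  have "zsum F \<in> zspan A"
    by (rule zspan_zsum[OF assms(2,3)])
  moreover have "zsum (F - ?T) \<in> zspan A"
    using assms(2,3) by (intro zspan_zsum) auto
  ultimately have "f (zsum ?T) \<le> max (f (zsum F)) (f (zsum (F - ?T)))"
    using assms(1) unfolding nonarchimedean_def split by blast
  also have "\<dots> < ?m"
  proof -
    have "f (zsum (F - ?T)) < ?m"
    proof (rule nonarchimedean_zsum_less[OF assms(1)])
      show "f {} < ?m"
        using nonarchimedean_empty_le[OF assms(1) zspan_zsum[OF assms(2,3)]] assms(4) by linarith
      show "\<forall>w\<in>F - ?T. f w < ?m"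
        using assms(2) by (auto simp: order.strict_iff_order)
    qed (use assms(2,3) in auto)
    then show ?thesis
      using assms(4) by simp
  qed
  finally show ?thesis .
qed

text \<open>The exchange that proves adaptedness for the second function replaces the element of largest
  first value among those of largest second value.\<close>

lemma adapted_if_no_lex_exchange:
  assumes B: "zbasis V B" "nonarchimedean V f1" "nonarchimedean V f2"
    and no_exchange: "\<And>G k. G \<subseteq> B \<Longrightarrow> k \<in> G \<Longrightarrow> \<not> (f1 (zsum G), f2 (zsum G)) < (f1 k, f2 k)"
  shows "adapted f2 B"
  unfolding adapted_def
proof (intro allI impI ballI, rule ccontr)
  fix F w
  assume F: "F \<subseteq> B" and "w \<in> F" and less: "\<not> f2 w \<le> f2 (zsum F)"
  have V: "V = zspan B" and "finite F" "F \<subseteq> zspan B"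
    using B(1) F zbasis_finite finite_subset zspan_base unfolding zbasis_def by blast+
  define T where "T = {y \<in> F. f2 y = Max (f2 ` F)}"
  have "f2 w \<le> Max (f2 ` F)"
    using \<open>finite F\<close> \<open>w \<in> F\<close> by simp
  then have top: "f2 (zsum T) < Max (f2 ` F)"
    unfolding T_def using zsum_top_level_less[of B f2 F] B(3) V \<open>finite F\<close> \<open>F \<subseteq> zspan B\<close> less
    by simp
  have "Max (f2 ` F) \<in> f2 ` F"
    using \<open>finite F\<close> \<open>w \<in> F\<close> by (intro Max_in) auto
  then have "T \<noteq> {}" "finite T" "T \<subseteq> B"
    using \<open>finite F\<close> F unfolding T_def by auto
  then obtain k where k: "k \<in> T" "Max (f1 ` T) = f1 k"
    using obtains_MAX[of T f1] by blast
  have "\<forall>y\<in>T. f1 y \<le> f1 k"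
    using \<open>finite T\<close> k(2) by (metis Max_ge finite_imageI imageI)
  moreover have "f1 {} \<le> f1 k"
    using nonarchimedean_empty_le[OF B(2)] k(1) \<open>T \<subseteq> B\<close> zbasis_subset[OF B(1)] by blast
  ultimately have "f1 (zsum T) \<le> f1 k"
    using nonarchimedean_zsum_le[of B f1 T "f1 k"] B(2) V \<open>finite T\<close> \<open>T \<subseteq> B\<close> zspan_base by blast
  moreover have "f2 k = Max (f2 ` F)"
    using k(1) unfolding T_def by simp
  ultimately show False
    using no_exchange[OF \<open>T \<subseteq> B\<close> k(1)] top by simp
qed

lemma exists_adapted_zbasis:
  assumes "finite A" "nonarchimedean (zspan A) f1" "nonarchimedean (zspan A) f2"
  shows "\<exists>B. zbasis (zspan A) B \<and> adapted f1 B \<and> adapted f2 B"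
proof -
  \<comment> \<open>Pairs are ordered lexicographically (HOL-Library.Product_Lexorder).\<close>
  define cost where "cost B = ((\<Sum>w\<in>B. f1 w), (\<Sum>w\<in>B. f2 w))" for B
  have "{B. zbasis (zspan A) B} \<subseteq> Pow (zspan A)"
    using zbasis_subset by blast
  then have "finite {B. zbasis (zspan A) B}"
    using assms(1) finite_zspan finite_subset by (metis finite_Pow_iff)
  moreover have "{B. zbasis (zspan A) B} \<noteq> {}"
    using exists_zbasis[OF assms(1)] by blast
  ultimately obtain B where B: "zbasis (zspan A) B"
    and min: "\<And>B'. zbasis (zspan A) B' \<Longrightarrow> \<not> cost B' < cost B"
    using ex_is_arg_min_if_finite[of _ cost] unfolding is_arg_min_def by (metis mem_Collect_eq)
  have "\<not> (f1 (zsum G), f2 (zsum G)) < (f1 k, f2 k)" if "G \<subseteq> B" "k \<in> G" for G k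
  proof
    assume "(f1 (zsum G), f2 (zsum G)) < (f1 k, f2 k)"
    then have "cost (insert (zsum G) (B - {k})) < cost B"
      unfolding cost_def sum_zbasis_exchange[OF B that] by auto
    then show False
      using min zbasis_exchange(2)[OF B that] by blast
  qed
  note no_exchange = this
  have "adapted f1 B"
    by (rule adapted_if_no_lowering_exchange[OF B]) (use no_exchange in auto)
  moreover have "adapted f2 B"
    by (rule adapted_if_no_lex_exchange[OF B assms(2,3) no_exchange])
  ultimately show ?thesis
    using B by blast
qed

section \<open>Connected components and H_0\<close>

lemma vrcomp_refl [simp]: "i \<in> vrcomp d n r i"
  unfolding vrcomp_def by simp

lemma vrcomp_subset_lessThan:
  assumes "i < n"
  shows "vrcomp d n r i \<subseteq> {..<n}"
proof
  fix j
  assume "j \<in> vrcomp d n r i"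
  then have "(i, j) \<in> (vredges d n r \<union> (vredges d n r)\<inverse>)\<^sup>*"
    unfolding vrcomp_def by simp
  then show "j \<in> {..<n}"
    by (induction rule: rtrancl_induct) (use assms in \<open>auto simp: vredges_def gedges_def split: if_splits\<close>)
qed

lemma vrcomp_eq:
  assumes "j \<in> vrcomp d n r i"
  shows "vrcomp d n r j = vrcomp d n r i"
proof -
  let ?R = "vredges d n r \<union> (vredges d n r)\<inverse>"
  have "(i, j) \<in> ?R\<^sup>*"
    using assms unfolding vrcomp_def by simp
  moreover have "(j, i) \<in> ?R\<^sup>*"
    using rtrancl_converseI[OF \<open>(i, j) \<in> ?R\<^sup>*\<close>] by (simp add: converse_Un Un_commute)
  ultimately show ?thesis
    unfolding vrcomp_def by (auto intro: rtrancl_trans)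
qed

lemma vrcomp_mono:
  assumes "vredges d n r \<subseteq> vredges d' n s"
  shows "vrcomp d n r i \<subseteq> vrcomp d' n s i"
proof -
  have "vredges d n r \<union> (vredges d n r)\<inverse> \<subseteq> vredges d' n s \<union> (vredges d' n s)\<inverse>"
    using assms by auto
  then show ?thesis
    unfolding vrcomp_def using rtrancl_mono by blast
qed

lemma vredges_mono: "r \<le> s \<Longrightarrow> vredges d n r \<subseteq> vredges d n s"
  unfolding vredges_def gedges_def by auto

lemma vredges_subset_if_le:
  assumes "\<forall>i<n. \<forall>j<n. dz i j \<le> dx i j"
  shows "vredges dx n r \<subseteq> vredges dz n r"
  using assms unfolding vredges_def gedges_def by (auto intro: order_trans)

lemma vrcomp_iff_gconn: "0 < r \<Longrightarrow> j \<in> vrcomp d n r i \<longleftrightarrow> gconn d n r i j"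
  unfolding vrcomp_def gconn_def vredges_def by simp

lemma vrcomp_nonpos: "\<not> 0 < r \<Longrightarrow> vrcomp d n r i = {i}"
  unfolding vrcomp_def vredges_def by simp

text \<open>As in \<^const>\<open>ker_plus\<close>, a vector of H_0(VR_0(Y)) is a finite subset of \<^term>\<open>{..<n}\<close>.
  The map H0proj is the quotient map onto H_0(VR_r(Y)), and H0lift is a section of it that picks
  a representative point in each component.\<close>

definition H0proj :: "(nat \<Rightarrow> nat \<Rightarrow> real) \<Rightarrow> nat \<Rightarrow> real \<Rightarrow> nat set \<Rightarrow> nat set set" where
  "H0proj d n r v = lin_ext (vrcomp d n r) v"

definition H0lift :: "nat set set \<Rightarrow> nat set" where
  "H0lift S = lin_ext (\<lambda>C. SOME i. i \<in> C) S"

lemma H0proj_zadd: "finite u \<Longrightarrow> finite v \<Longrightarrow> H0proj d n r (zadd u v) = zadd (H0proj d n r u) (H0proj d n r v)"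
  unfolding H0proj_def by (rule lin_ext_zadd)

lemma H0lift_zadd: "finite S \<Longrightarrow> finite T \<Longrightarrow> H0lift (zadd S T) = zadd (H0lift S) (H0lift T)"
  unfolding H0lift_def by (rule lin_ext_zadd)

lemma H0proj_in_vsp:
  assumes "v \<in> vsp {..<n}"
  shows "H0proj d n r v \<in> vsp (H0gen d n r)"
  using assms lin_ext_subset_image[of "vrcomp d n r" v] finite_lin_ext[of v "vrcomp d n r"]
  unfolding vsp_def H0proj_def H0gen_def by auto

lemma H0gen_representative:
  assumes "C \<in> H0gen d n r"
  shows "(SOME i. i \<in> C) < n" "vrcomp d n r (SOME i. i \<in> C) = C"
proof -
  obtain i where i: "i < n" "C = vrcomp d n r i"
    using assms unfolding H0gen_def by auto
  then have "(SOME i. i \<in> C) \<in> C"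
    using vrcomp_refl by (metis someI)
  then show "(SOME i. i \<in> C) < n" "vrcomp d n r (SOME i. i \<in> C) = C"
    using i vrcomp_subset_lessThan vrcomp_eq by blast+
qed

lemma H0lift_in_vsp:
  assumes "S \<in> vsp (H0gen d n r)"
  shows "H0lift S \<in> vsp {..<n}"
  using assms lin_ext_subset_image[of "\<lambda>C. SOME i. i \<in> C" S] finite_lin_ext[of S]
    H0gen_representative(1)[of _ d n r]
  unfolding vsp_def H0lift_def by blast

lemma H0proj_H0lift:
  assumes "S \<in> vsp (H0gen d n r)"
  shows "H0proj d n r (H0lift S) = S"
  using assms H0gen_representative(2)
  unfolding H0proj_def H0lift_def vsp_def by (auto simp: lin_ext_lin_ext intro!: lin_ext_fixpoint)

lemma H0map_H0proj:
  assumes "v \<in> vsp {..<n}" "\<forall>i<n. vrcomp d' n r i \<subseteq> vrcomp d n s i"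
  shows "H0map d n s (H0proj d' n r v) = H0proj d n s v"
proof -
  have "vrcomp d n s (SOME j. j \<in> vrcomp d' n r i) = vrcomp d n s i" if "i \<in> v" for i
  proof -
    have "(SOME j. j \<in> vrcomp d' n r i) \<in> vrcomp d' n r i"
      using vrcomp_refl by (rule someI)
    then show ?thesis
      using assms that vrcomp_eq unfolding vsp_def by blast
  qed
  then have "lin_ext ((\<lambda>C. vrcomp d n s (SOME i. i \<in> C)) \<circ> vrcomp d' n r) v = lin_ext (vrcomp d n s) v"
    by (intro lin_ext_cong) simp
  then show ?thesis
    using assms(1) unfolding H0map_def H0proj_def vsp_def by (simp add: lin_ext_lin_ext)
qed

lemma zlinear_H0map:
  assumes "\<forall>i<n. vrcomp d' n r i \<subseteq> vrcomp d n s i"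
  shows "zlinear (H0gen d' n r) (H0gen d n s) (H0map d n s)"
  unfolding zlinear_def
proof (intro conjI ballI)
  fix S
  assume S: "S \<in> vsp (H0gen d' n r)"
  then have "H0map d n s S = H0proj d n s (H0lift S)"
    using H0map_H0proj[OF H0lift_in_vsp[OF S] assms] H0proj_H0lift[OF S] by simp
  then show "H0map d n s S \<in> vsp (H0gen d n s)"
    using H0proj_in_vsp[OF H0lift_in_vsp[OF S]] by simp
next
  fix S T
  assume "S \<in> vsp (H0gen d' n r)" "T \<in> vsp (H0gen d' n r)"
  then show "H0map d n s (zadd S T) = zadd (H0map d n s S) (H0map d n s T)"
    unfolding H0map_def vsp_def by (simp add: lin_ext_zadd)
qed

lemma is_pmor_H0map:
  assumes "\<And>r. vredges dx n r \<subseteq> vredges dz n r"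
  shows "is_pmor (H0gen dx n) (PH0rho dx n) (H0gen dz n) (PH0rho dz n) (H0map dz n)"
  unfolding is_pmor_def
proof (intro conjI allI impI ballI)
  fix r :: real
  show "zlinear (H0gen dx n r) (H0gen dz n r) (H0map dz n r)"
    using zlinear_H0map vrcomp_mono[OF assms] by blast
next
  fix r s :: real and S
  assume rs: "0 \<le> r \<and> r \<le> s" and S: "S \<in> vsp (H0gen dx n r)"
  define v where "v = H0lift S"
  have v: "v \<in> vsp {..<n}" and S_eq: "S = H0proj dx n r v"
    using H0lift_in_vsp[OF S] H0proj_H0lift[OF S] unfolding v_def by auto
  have "\<forall>i<n. vrcomp d n r i \<subseteq> vrcomp d n s i" for d
    using vrcomp_mono vredges_mono rs by blast
  moreover have "\<forall>i<n. vrcomp dx n t i \<subseteq> vrcomp dz n t i" for t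
    using vrcomp_mono[OF assms] by blast
  ultimately show "H0map dz n s (PH0rho dx n r s S) = PH0rho dz n r s (H0map dz n r S)"
    unfolding PH0rho_def S_eq using v by (simp add: H0map_H0proj)
qed

definition conn_pairs :: "(nat \<Rightarrow> nat \<Rightarrow> real) \<Rightarrow> nat \<Rightarrow> real \<Rightarrow> nat set set" where
  "conn_pairs d n r = {{i, j} | i j. i < n \<and> j < n \<and> i \<noteq> j \<and> gconn d n r i j}"

lemma ker_plus_conn_pairs: "ker_plus d n r = zspan (conn_pairs d n r)"
  unfolding ker_plus_def conn_pairs_def ..

lemma gconn_subset:
  assumes "gedges d n r \<subseteq> gedges d' n s" "gconn d n r i j"
  shows "gconn d' n s i j"
proof -
  have "gedges d n r \<union> (gedges d n r)\<inverse> \<subseteq> gedges d' n s \<union> (gedges d' n s)\<inverse>"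
    using assms(1) by blast
  then show ?thesis
    using assms(2) rtrancl_mono unfolding gconn_def by blast
qed

lemma gconn_mono: "r \<le> s \<Longrightarrow> gconn d n r i j \<Longrightarrow> gconn d n s i j"
  by (rule gconn_subset) (auto simp: gedges_def)

lemma ker_plus_mono: "r \<le> s \<Longrightarrow> ker_plus d n r \<subseteq> ker_plus d n s"
  unfolding ker_plus_conn_pairs conn_pairs_def by (intro zspan_mono) (blast dest: gconn_mono)

lemma H0proj_eq_empty_iff:
  assumes "v \<in> vsp {..<n}"
  shows "H0proj d n r v = {} \<longleftrightarrow> v = {} \<or> (0 < r \<and> v \<in> ker_plus d n r)"
proof (cases "0 < r")
  case False
  then have "H0proj d n r v = lin_ext (\<lambda>i. {i}) v"
    unfolding H0proj_def by (intro lin_ext_cong) (simp add: vrcomp_nonpos)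
  also have "\<dots> = (\<lambda>i. {i}) ` v"
    using assms unfolding vsp_def by (intro lin_ext_inj_on) auto
  finally have "H0proj d n r v = (\<lambda>i. {i}) ` v" .
  then show ?thesis
    using False by simp
next
  case True
  have same_comp: "vrcomp d n r i = vrcomp d n r j \<longleftrightarrow> gconn d n r i j" for i j
    using vrcomp_iff_gconn[OF True] vrcomp_eq vrcomp_refl by metis
  have "H0proj d n r v = {} \<longleftrightarrow> v \<in> ker_plus d n r"
  proof
    assume "H0proj d n r v = {}"
    then have "v \<in> zspan {{i, j} | i j. i \<in> v \<and> j \<in> v \<and> i \<noteq> j \<and> vrcomp d n r i = vrcomp d n r j}"
      using assms unfolding H0proj_def vsp_def by (intro in_zspan_pairs_if_lin_ext_eq_empty) auto
    also have "\<dots> \<subseteq> ker_plus d n r"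
      using assms unfolding ker_plus_conn_pairs conn_pairs_def vsp_def same_comp
      by (intro zspan_mono) blast
    finally show "v \<in> ker_plus d n r" .
  next
    assume "v \<in> ker_plus d n r"
    then obtain F where "finite F" "F \<subseteq> conn_pairs d n r" "v = zsum F"
      unfolding ker_plus_conn_pairs zspan_def by blast
    then show "H0proj d n r v = {}"
      unfolding H0proj_def conn_pairs_def same_comp[symmetric]
      using lin_ext_zsum_pairs[of F "vrcomp d n r"] by blast
  qed
  then show ?thesis
    using True by (auto simp: H0proj_def)
qed

section \<open>Death times\<close>

definition even_vecs :: "nat \<Rightarrow> nat set set" where
  "even_vecs n = zspan {{i, j} | i j. i < n \<and> j < n \<and> i \<noteq> j}"

definition levels :: "(nat \<Rightarrow> nat \<Rightarrow> real) \<Rightarrow> nat \<Rightarrow> real set" where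
  "levels d n = insert 0 ((\<lambda>(i, j). d i j) ` ({..<n} \<times> {..<n}))"

definition death_time :: "(nat \<Rightarrow> nat \<Rightarrow> real) \<Rightarrow> nat \<Rightarrow> nat set \<Rightarrow> real" where
  "death_time d n v = Min {a \<in> levels d n. v \<in> ker_plus d n a}"

lemma ker_plus_subset_even_vecs: "ker_plus d n r \<subseteq> even_vecs n"
  unfolding ker_plus_conn_pairs conn_pairs_def even_vecs_def by (intro zspan_mono) blast

lemma even_vecs_subset: "even_vecs n \<subseteq> {v \<in> vsp {..<n}. even (card v)}"
proof
  fix v
  assume "v \<in> even_vecs n"
  then obtain F where F: "finite F" "F \<subseteq> {{i, j} | i j. i < n \<and> j < n \<and> i \<noteq> j}" "v = zsum F"
    unfolding even_vecs_def zspan_def by blast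
  have "zsum F \<in> vsp {..<n} \<and> even (card (zsum F))"
    using F(1,2)
  proof (induction F rule: finite_induct)
    case (insert p F)
    then obtain i j where "p = {i, j}" "i < n" "j < n" "i \<noteq> j"
      by blast
    then show ?case
      using insert zadd_in_vsp[of p "{..<n}" "zsum F"] odd_card_zadd[of p "zsum F"]
      by (simp add: zsum_insert vsp_def)
  qed (simp add: vsp_def)
  then show "v \<in> {v \<in> vsp {..<n}. even (card v)}"
    using F(3) by simp
qed

lemma even_card_in_even_vecs:
  assumes "finite v" "v \<subseteq> {..<n}" "even (card v)"
  shows "v \<in> even_vecs n"
  using assms
proof (induction "card v" arbitrary: v rule: less_induct)
  case less
  show ?case
  proof (cases "v = {}")
    case True
    then show ?thesis
      unfolding even_vecs_def by (simp add: zspan_empty)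
  next
    case False
    then obtain x where x: "x \<in> v"
      by blast
    moreover have "v \<noteq> {x}"
      using less.prems(3) by auto
    ultimately obtain y where y: "y \<in> v" "y \<noteq> x"
      by blast
    have v_eq: "v = zadd {x, y} (v - {x, y})"
      unfolding zadd_def using x y by auto
    have "card (v - {x, y}) = card v - 2" "card v \<ge> 2"
      using x y less.prems(1) card_mono[of v "{x, y}"] by (auto simp: card_Diff_subset)
    then have "v - {x, y} \<in> even_vecs n"
      using less by (intro less.hyps) auto
    moreover have "{x, y} \<in> even_vecs n"
      unfolding even_vecs_def using x y less.prems(2) by (intro zspan_base) blast
    ultimately have "zadd {x, y} (v - {x, y}) \<in> even_vecs n"
      unfolding even_vecs_def by (rule zspan_zadd[rotated])
    then show ?thesis
      by (simp only: v_eq[symmetric])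
  qed
qed

lemma even_vecs_eq: "even_vecs n = {v \<in> vsp {..<n}. even (card v)}"
  using even_vecs_subset even_card_in_even_vecs unfolding vsp_def by blast

lemma singleton_notin_even_vecs: "{i} \<notin> even_vecs n"
  by (simp add: even_vecs_eq)

lemma even_vecs_or_zadd_singleton:
  assumes "v \<in> vsp {..<n}" "0 < n"
  shows "v \<in> even_vecs n \<or> zadd {0} v \<in> even_vecs n"
  using assms odd_card_zadd[of "{0}" v] zadd_in_vsp[of "{0}" "{..<n}" v]
  unfolding even_vecs_eq vsp_def by auto

lemma gedges_level_below:
  assumes "0 \<le> a"
  obtains a' where "a' \<in> levels d n" "a' \<le> a" "gedges d n a' = gedges d n a"
proof -
  let ?a' = "Max {x \<in> levels d n. x \<le> a}"
  have fin: "finite {x \<in> levels d n. x \<le> a}"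
    unfolding levels_def by simp
  moreover have "0 \<in> {x \<in> levels d n. x \<le> a}"
    using assms unfolding levels_def by simp
  ultimately have "?a' \<in> {x \<in> levels d n. x \<le> a}"
    by (intro Max_in) auto
  then have a': "?a' \<in> levels d n" "?a' \<le> a"
    by auto
  have "d i j \<le> ?a'" if "i < n" "j < n" "d i j \<le> a" for i j
    using that fin unfolding levels_def by (intro Max_ge) auto
  then have "gedges d n ?a' = gedges d n a"
    using a'(2) unfolding gedges_def by fastforce
  then show ?thesis
    using that a' by blast
qed

lemma even_vecs_subset_ker_plus_Max: "even_vecs n \<subseteq> ker_plus d n (Max (levels d n))"
proof -
  have "d i j \<le> Max (levels d n)" if "i < n" "j < n" for i j
    using that unfolding levels_def by (intro Max_ge) auto
  then have "gconn d n (Max (levels d n)) i j" if "i < n" "j < n" "i \<noteq> j" for i j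
    using that unfolding gconn_def gedges_def by blast
  then show ?thesis
    unfolding even_vecs_def ker_plus_conn_pairs conn_pairs_def by (intro zspan_mono) blast
qed

lemma death_time:
  assumes "v \<in> even_vecs n"
  shows "death_time d n v \<in> levels d n" "v \<in> ker_plus d n (death_time d n v)"
proof -
  have "Max (levels d n) \<in> levels d n"
    unfolding levels_def by (intro Max_in) auto
  then have "Max (levels d n) \<in> {a \<in> levels d n. v \<in> ker_plus d n a}"
    using assms even_vecs_subset_ker_plus_Max by blast
  then have "Min {a \<in> levels d n. v \<in> ker_plus d n a} \<in> {a \<in> levels d n. v \<in> ker_plus d n a}"
    unfolding levels_def by (intro Min_in) auto
  then show "death_time d n v \<in> levels d n" "v \<in> ker_plus d n (death_time d n v)"
    unfolding death_time_def by auto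
qed

lemma in_ker_plus_iff_death_time_le:
  assumes "v \<in> even_vecs n" "0 \<le> a"
  shows "v \<in> ker_plus d n a \<longleftrightarrow> death_time d n v \<le> a"
proof
  assume "v \<in> ker_plus d n a"
  obtain a' where a': "a' \<in> levels d n" "a' \<le> a" "gedges d n a' = gedges d n a"
    using gedges_level_below[OF assms(2)] by blast
  then have "v \<in> ker_plus d n a'"
    using \<open>v \<in> ker_plus d n a\<close> unfolding ker_plus_def gconn_def by simp
  then have "death_time d n v \<le> a'"
    unfolding death_time_def using a'(1) by (intro Min_le) (auto simp: levels_def)
  then show "death_time d n v \<le> a"
    using a'(2) by simp
next
  assume "death_time d n v \<le> a"
  then show "v \<in> ker_plus d n a"
    using death_time(2)[OF assms(1)] ker_plus_mono by blast
qed

lemma death_time_nonneg: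
  assumes "\<forall>i<n. \<forall>j<n. 0 \<le> d i j" "v \<in> even_vecs n"
  shows "0 \<le> death_time d n v"
  using death_time(1)[OF assms(2), of d] assms(1) unfolding levels_def by auto

lemma ker_plus_eq_sublevel:
  assumes "0 \<le> a"
  shows "ker_plus d n a = {v \<in> even_vecs n. v = {} \<or> death_time d n v \<le> a}"
  using in_ker_plus_iff_death_time_le[OF _ assms] ker_plus_subset_even_vecs zspan_empty
  unfolding ker_plus_conn_pairs by blast

lemma ker_minus_eq_ker_plus:
  assumes "0 < b"
  shows "ker_minus d n b = ker_plus d n (Max {a \<in> levels d n. a < b})"
proof -
  define r0 where "r0 = Max {a \<in> levels d n. a < b}"
  have fin: "finite {a \<in> levels d n. a < b}"
    unfolding levels_def by simp
  have "0 \<in> {a \<in> levels d n. a < b}"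
    using assms unfolding levels_def by simp
  then have "r0 \<in> {a \<in> levels d n. a < b}" "0 \<le> r0"
    using fin Max_in[OF fin] Max_ge[OF fin] unfolding r0_def by blast+
  have "{{i, j} | i j r. i < n \<and> j < n \<and> i \<noteq> j \<and> 0 \<le> r \<and> r < b \<and> gconn d n r i j}
    = conn_pairs d n r0"
  proof (intro equalityI subsetI)
    fix p
    assume "p \<in> {{i, j} | i j r. i < n \<and> j < n \<and> i \<noteq> j \<and> 0 \<le> r \<and> r < b \<and> gconn d n r i j}"
    then obtain i j r where p: "p = {i, j}" "i < n" "j < n" "i \<noteq> j" "0 \<le> r" "r < b" "gconn d n r i j"
      by blast
    obtain a' where "a' \<in> levels d n" "a' \<le> r" "gedges d n a' = gedges d n r"
      using gedges_level_below[OF p(5)] by blast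
    moreover have "a' \<le> r0"
      using calculation p(6) fin unfolding r0_def by (intro Max_ge) auto
    ultimately have "gconn d n r0 i j"
      using p gconn_mono[of a' r0] unfolding gconn_def by auto
    then show "p \<in> conn_pairs d n r0"
      unfolding conn_pairs_def using p by blast
  qed (use \<open>r0 \<in> _\<close> \<open>0 \<le> r0\<close> in \<open>auto simp: conn_pairs_def\<close>)
  then show ?thesis
    unfolding ker_minus_def ker_plus_conn_pairs r0_def using assms by simp
qed

lemma ker_minus_eq_sublevel:
  assumes nonneg: "\<forall>i<n. \<forall>j<n. 0 \<le> d i j" and "0 \<le> b"
  shows "ker_minus d n b = {v \<in> even_vecs n. v = {} \<or> death_time d n v < b}"
proof (cases "b = 0")
  case True
  then show ?thesis
    unfolding ker_minus_def using death_time_nonneg[OF nonneg] zspan_empty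
    by (fastforce simp: even_vecs_def not_less)
next
  case False
  define r0 where "r0 = Max {a \<in> levels d n. a < b}"
  have fin: "finite {a \<in> levels d n. a < b}"
    unfolding levels_def by simp
  have "0 \<in> {a \<in> levels d n. a < b}"
    using False assms(2) unfolding levels_def by simp
  then have "r0 \<in> {a \<in> levels d n. a < b}"
    using Max_in[OF fin] unfolding r0_def by blast
  then have "death_time d n v \<le> r0 \<longleftrightarrow> death_time d n v < b" if "v \<in> even_vecs n" for v
    using death_time(1)[OF that] fin unfolding r0_def by (auto intro: Max_ge)
  moreover have "ker_minus d n b = {v \<in> even_vecs n. v = {} \<or> death_time d n v \<le> r0}"
    using ker_minus_eq_ker_plus[of b d n] ker_plus_eq_sublevel[of r0 d n] \<open>r0 \<in> _\<close> False assms(2)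
      death_time_nonneg[OF nonneg] unfolding r0_def by (simp add: levels_def)
  ultimately show ?thesis
    by blast
qed

lemma nonarchimedean_death_time:
  assumes "\<forall>i<n. \<forall>j<n. 0 \<le> d i j"
  shows "nonarchimedean (even_vecs n) (death_time d n)"
  unfolding nonarchimedean_def
proof (intro ballI)
  fix u v
  assume uv: "u \<in> even_vecs n" "v \<in> even_vecs n"
  let ?c = "max (death_time d n u) (death_time d n v)"
  have "0 \<le> ?c"
    using death_time_nonneg[OF assms uv(1)] by simp
  then have "u \<in> ker_plus d n ?c" "v \<in> ker_plus d n ?c"
    using uv in_ker_plus_iff_death_time_le by auto
  then have "zadd u v \<in> ker_plus d n ?c"
    unfolding ker_plus_conn_pairs by (rule zspan_zadd)
  moreover have "zadd u v \<in> even_vecs n"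
    using uv unfolding even_vecs_def by (rule zspan_zadd)
  ultimately show "death_time d n (zadd u v) \<le> ?c"
    using in_ker_plus_iff_death_time_le \<open>0 \<le> ?c\<close> by blast
qed

lemma death_time_mono:
  assumes "\<forall>i<n. \<forall>j<n. 0 \<le> dz i j" "\<forall>i<n. \<forall>j<n. dz i j \<le> dx i j" "v \<in> even_vecs n"
  shows "death_time dz n v \<le> death_time dx n v"
proof -
  have "\<forall>i<n. \<forall>j<n. 0 \<le> dx i j"
    using assms(1,2) by (meson order_trans)
  then have a: "0 \<le> death_time dx n v"
    using death_time_nonneg assms(3) by blast
  have "gedges dx n a \<subseteq> gedges dz n a" for a
    using assms(2) unfolding gedges_def by (auto intro: order_trans)
  then have "ker_plus dx n a \<subseteq> ker_plus dz n a" for a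
    unfolding ker_plus_conn_pairs conn_pairs_def by (intro zspan_mono) (blast dest: gconn_subset)
  then have "v \<in> ker_plus dz n (death_time dx n v)"
    using death_time(2)[OF assms(3)] by blast
  then show ?thesis
    using in_ker_plus_iff_death_time_le[OF assms(3) a] by blast
qed

lemma ker_plus_minus_adapted:
  assumes "\<forall>i<n. \<forall>j<n. 0 \<le> d i j" "zbasis (even_vecs n) B" "adapted (death_time d n) B" "0 \<le> c"
  shows "ker_plus d n c = zspan {w \<in> B. death_time d n w \<le> c}"
    "ker_minus d n c = zspan {w \<in> B. death_time d n w < c}"
proof -
  have sublevel: "zspan {w \<in> B. P (death_time d n w)} = {v \<in> even_vecs n. v = {} \<or> P (death_time d n v)}"
    if "\<And>x y. x \<le> y \<Longrightarrow> P y \<Longrightarrow> P x" for P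
    by (rule zspan_adapted_sublevel[OF assms(2) nonarchimedean_death_time[OF assms(1)] assms(3) that])
  have "zspan {w \<in> B. death_time d n w \<le> c} = {v \<in> even_vecs n. v = {} \<or> death_time d n v \<le> c}"
    by (rule sublevel) simp
  moreover have "zspan {w \<in> B. death_time d n w < c} = {v \<in> even_vecs n. v = {} \<or> death_time d n v < c}"
    by (rule sublevel) simp
  ultimately show "ker_plus d n c = zspan {w \<in> B. death_time d n w \<le> c}"
    "ker_minus d n c = zspan {w \<in> B. death_time d n w < c}"
    using ker_plus_eq_sublevel[OF assms(4)] ker_minus_eq_sublevel[OF assms(1,4)] by simp_all
qed

lemma block_fun_eq_card:
  assumes "\<forall>i<n. \<forall>j<n. 0 \<le> dx i j" "\<forall>i<n. \<forall>j<n. 0 \<le> dz i j"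
    and B: "zbasis (even_vecs n) B" "adapted (death_time dx n) B" "adapted (death_time dz n) B"
    and "0 \<le> a" "0 \<le> b"
  shows "block_fun dx dz n a b = card {w \<in> B. death_time dx n w = a \<and> death_time dz n w = b}"
proof -
  let ?PX = "{w \<in> B. death_time dx n w \<le> a}" and ?QX = "{w \<in> B. death_time dx n w < a}"
  let ?PZ = "{w \<in> B. death_time dz n w \<le> b}" and ?QZ = "{w \<in> B. death_time dz n w < b}"
  have indep: "zindep B" and "finite B"
    using B(1) zbasis_finite unfolding zbasis_def by auto
  note X = ker_plus_minus_adapted[OF assms(1) B(1,2) assms(6)]
  note Z = ker_plus_minus_adapted[OF assms(2) B(1,3) assms(7)]
  have "block_fun dx dz n a b
      = quot_dim (zspan (?PX \<inter> ?PZ)) (subspace_sum (zspan (?QX \<inter> ?PZ)) (zspan (?PX \<inter> ?QZ)))"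
    unfolding block_fun_def X Z by (simp add: zspan_Int[OF indep])
  also have "\<dots> = quot_dim (zspan (?PX \<inter> ?PZ)) (zspan ((?QX \<inter> ?PZ) \<union> (?PX \<inter> ?QZ)))"
    using \<open>finite B\<close> by (subst subspace_sum_zspan) auto
  also have "\<dots> = card ((?PX \<inter> ?PZ) - ((?QX \<inter> ?PZ) \<union> (?PX \<inter> ?QZ)))"
    using indep by (intro quot_dim_zspan) auto
  also have "(?PX \<inter> ?PZ) - ((?QX \<inter> ?PZ) \<union> (?PX \<inter> ?QZ))
      = {w \<in> B. death_time dx n w = a \<and> death_time dz n w = b}"
    by auto
  finally show ?thesis .
qed

section \<open>Persistence isomorphisms with sums of interval modules\<close>

text \<open>The singleton \<^term>\<open>{0::nat}\<close> generates the bar of infinite length and every \<^term>\<open>w \<in> B\<close>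
  the bar [0, death time of w); \<^term>\<open>tag\<close> names the bars.\<close>

locale H0_adapted_basis =
  fixes n :: nat and d :: "nat \<Rightarrow> nat \<Rightarrow> real" and B :: "nat set set" and tag :: "nat set \<Rightarrow> 'i"
  assumes n_pos: "0 < n"
    and nonneg: "\<forall>i<n. \<forall>j<n. 0 \<le> d i j"
    and basis: "zbasis (even_vecs n) B"
    and adapted: "adapted (death_time d n) B"
    and inj_tag: "inj_on tag (insert {0} B)"
begin

definition alive :: "real \<Rightarrow> nat set \<Rightarrow> bool" where
  "alive r w \<longleftrightarrow> w = {0} \<or> ivl (death_time d n w) r"

definition bars :: "real \<Rightarrow> 'i set" where
  "bars r = tag ` {w \<in> insert {0} B. alive r w}"

definition bar_coords :: "real \<Rightarrow> nat set \<Rightarrow> 'i set" where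
  "bar_coords r v = tag ` {w \<in> zcoord (insert {0} B) v. alive r w}"

definition H0_iso :: "real \<Rightarrow> nat set set \<Rightarrow> 'i set" where
  "H0_iso r S = bar_coords r (H0lift S)"

lemma zbasis_insert_singleton: "zbasis (vsp {..<n}) (insert {0} B)"
proof -
  have "{0} \<notin> zspan B"
    using basis singleton_notin_even_vecs unfolding zbasis_def by simp
  then have "zindep (insert {0} B)"
    using zindep_insert basis unfolding zbasis_def by blast
  moreover have "zspan (insert {0} B) = vsp {..<n}"
  proof
    have "insert {0} B \<subseteq> vsp {..<n}"
      using zbasis_subset[OF basis] n_pos unfolding even_vecs_eq vsp_def by auto
    then show "zspan (insert {0} B) \<subseteq> vsp {..<n}"
      by (rule zspan_subset_vsp)
    show "vsp {..<n} \<subseteq> zspan (insert {0} B)"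
    proof
      fix v
      assume v: "v \<in> vsp {..<n}"
      have "zspan B \<subseteq> zspan (insert {0} B)" "{0} \<in> zspan (insert {0} B)"
        by (simp_all add: subset_insertI zspan_mono zspan_base)
      then have "v \<in> zspan (insert {0} B) \<or> zadd {0} v \<in> zspan (insert {0} B)"
        using even_vecs_or_zadd_singleton[OF v n_pos] basis unfolding zbasis_def by blast
      then show "v \<in> zspan (insert {0} B)"
        using zspan_zadd[OF \<open>{0} \<in> zspan (insert {0} B)\<close>, of "zadd {0} v"] by auto
    qed
  qed
  ultimately show ?thesis
    unfolding zbasis_def by simp
qed

lemma zcoord_subset: "v \<in> vsp {..<n} \<Longrightarrow> zcoord (insert {0} B) v \<subseteq> insert {0} B"
  using zcoord(1)[OF zbasis_insert_singleton] .

lemma finite_zcoord: "v \<in> vsp {..<n} \<Longrightarrow> finite (zcoord (insert {0} B) v)"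
  using zcoord_subset zbasis_finite[OF zbasis_insert_singleton] finite_subset by blast

lemma not_alive_iff:
  assumes "w \<in> B" "0 \<le> r"
  shows "\<not> alive r w \<longleftrightarrow> 0 < r \<and> death_time d n w \<le> r"
proof -
  have "w \<in> even_vecs n"
    using assms(1) zbasis_subset[OF basis] by blast
  then have "w \<noteq> {0}" "0 \<le> death_time d n w"
    using singleton_notin_even_vecs death_time_nonneg[OF nonneg] by auto
  then show ?thesis
    using assms(2) unfolding alive_def ivl_def by auto
qed

lemma in_even_vecs_iff_zcoord:
  assumes "v \<in> vsp {..<n}"
  shows "v \<in> even_vecs n \<longleftrightarrow> {0} \<notin> zcoord (insert {0} B) v"
proof
  assume "v \<in> even_vecs n"
  then have "v \<in> zsum ` Pow B"
    using basis zbasis_finite[OF basis] unfolding zbasis_def by (simp add: zspan_eq_image_Pow)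
  then obtain G where "G \<subseteq> B" "v = zsum G"
    by blast
  moreover have "{0} \<notin> B"
    using zbasis_subset[OF basis] singleton_notin_even_vecs by blast
  ultimately show "{0} \<notin> zcoord (insert {0} B) v"
    using zcoord_zsum[of "insert {0} B" G] zbasis_insert_singleton unfolding zbasis_def by auto
next
  assume "{0} \<notin> zcoord (insert {0} B) v"
  then have "zcoord (insert {0} B) v \<subseteq> B"
    using zcoord_subset[OF assms] by blast
  then show "v \<in> even_vecs n"
    using zbasis_zsum_in[OF basis] zcoord(2)[OF zbasis_insert_singleton assms] by metis
qed

lemma bar_coords_eq_empty_iff:
  assumes "0 \<le> r" "v \<in> vsp {..<n}"
  shows "bar_coords r v = {} \<longleftrightarrow> H0proj d n r v = {}"
proof (cases "v \<in> even_vecs n")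
  case False
  then have "H0proj d n r v \<noteq> {}"
    using H0proj_eq_empty_iff[OF assms(2)] ker_plus_subset_even_vecs zspan_empty
    unfolding even_vecs_def by blast
  moreover have "bar_coords r v \<noteq> {}"
    using False in_even_vecs_iff_zcoord[OF assms(2)] unfolding bar_coords_def alive_def by blast
  ultimately show ?thesis
    by simp
next
  case True
  define F where "F = zcoord (insert {0} B) v"
  have FB: "F \<subseteq> B" and v: "zsum F = v"
    using True in_even_vecs_iff_zcoord[OF assms(2)] zcoord[OF zbasis_insert_singleton assms(2)]
    unfolding F_def by auto
  have indep: "zindep B"
    using basis unfolding zbasis_def by simp
  have "F = {} \<longleftrightarrow> v = {}"
    using v FB indep unfolding zindep_def by auto
  moreover have "v \<in> ker_plus d n r \<longleftrightarrow> (\<forall>w\<in>F. death_time d n w \<le> r)"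
    using ker_plus_minus_adapted(1)[OF nonneg basis adapted assms(1)] v
      zsum_in_zspan_iff[OF indep FB, of "{w \<in> B. death_time d n w \<le> r}"] FB by auto
  ultimately have "H0proj d n r v = {} \<longleftrightarrow> F = {} \<or> (0 < r \<and> (\<forall>w\<in>F. death_time d n w \<le> r))"
    using H0proj_eq_empty_iff[OF assms(2)] by simp
  also have "\<dots> \<longleftrightarrow> (\<forall>w\<in>F. \<not> alive r w)"
    using not_alive_iff[OF _ assms(1)] FB by blast
  also have "\<dots> \<longleftrightarrow> bar_coords r v = {}"
    unfolding bar_coords_def F_def by blast
  finally show ?thesis ..
qed

lemma bar_coords_zadd:
  assumes "u \<in> vsp {..<n}" "v \<in> vsp {..<n}"
  shows "bar_coords r (zadd u v) = zadd (bar_coords r u) (bar_coords r v)"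
  unfolding bar_coords_def zcoord_zadd[OF zbasis_insert_singleton assms] Collect_zadd
  using zcoord_subset[OF assms(1)] zcoord_subset[OF assms(2)]
  by (intro image_zadd inj_on_subset[OF inj_tag]) auto

lemma bar_coords_cong:
  assumes "0 \<le> r" "u \<in> vsp {..<n}" "v \<in> vsp {..<n}" "H0proj d n r u = H0proj d n r v"
  shows "bar_coords r u = bar_coords r v"
proof -
  have "H0proj d n r (zadd u v) = {}"
    using assms(2-4) unfolding vsp_def by (simp add: H0proj_zadd)
  then have "bar_coords r (zadd u v) = {}"
    using bar_coords_eq_empty_iff[OF assms(1) zadd_in_vsp[OF assms(2,3)]] by simp
  then show ?thesis
    using bar_coords_zadd[OF assms(2,3)] by (simp add: zadd_eq_empty_iff)
qed

lemma bar_coords_in_vsp: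
  assumes "v \<in> vsp {..<n}"
  shows "bar_coords r v \<in> vsp (bars r)"
proof -
  have "bar_coords r v \<subseteq> bars r"
    using zcoord_subset[OF assms] unfolding bar_coords_def bars_def by blast
  moreover have "finite (bar_coords r v)"
    using finite_zcoord[OF assms] unfolding bar_coords_def by simp
  ultimately show ?thesis
    unfolding vsp_def by simp
qed

lemma bar_coords_surj:
  assumes "T \<in> vsp (bars r)"
  obtains v where "v \<in> vsp {..<n}" "bar_coords r v = T"
proof -
  define F where "F = {w \<in> insert {0} B. alive r w \<and> tag w \<in> T}"
  have F: "F \<subseteq> insert {0} B" "finite F"
    using zbasis_finite[OF zbasis_insert_singleton] unfolding F_def by auto
  then have "zsum F \<in> vsp {..<n}"
    using zbasis_zsum_in[OF zbasis_insert_singleton] by blast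
  moreover have "zcoord (insert {0} B) (zsum F) = F"
    using zbasis_insert_singleton F(1) zcoord_zsum unfolding zbasis_def by blast
  then have "bar_coords r (zsum F) = tag ` F"
    unfolding bar_coords_def F_def by auto
  moreover have "T \<subseteq> tag ` {w \<in> insert {0} B. alive r w}"
    using assms unfolding vsp_def bars_def by simp
  then have "tag ` F = T"
    unfolding F_def by blast
  ultimately show ?thesis
    using that by blast
qed

lemma bar_coords_restrict:
  assumes "0 \<le> r" "r \<le> s" "v \<in> vsp {..<n}"
  shows "bar_coords s v = bar_coords r v \<inter> bars s"
proof -
  have "alive s w \<Longrightarrow> alive r w" for w
    using assms(1,2) unfolding alive_def ivl_def by (auto split: if_splits)
  then have "{w \<in> zcoord (insert {0} B) v. alive s w}
      = {w \<in> zcoord (insert {0} B) v. alive r w} \<inter> {w \<in> insert {0} B. alive s w}"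
    using zcoord_subset[OF assms(3)] by blast
  moreover have "tag ` ({w \<in> zcoord (insert {0} B) v. alive r w} \<inter> {w \<in> insert {0} B. alive s w})
      = tag ` {w \<in> zcoord (insert {0} B) v. alive r w} \<inter> tag ` {w \<in> insert {0} B. alive s w}"
    using zcoord_subset[OF assms(3)] by (intro inj_on_image_Int[OF inj_tag]) auto
  ultimately show ?thesis
    unfolding bar_coords_def bars_def by simp
qed

lemma H0_iso_H0proj:
  assumes "0 \<le> r" "v \<in> vsp {..<n}"
  shows "H0_iso r (H0proj d n r v) = bar_coords r v"
  using bar_coords_cong[OF assms(1) H0lift_in_vsp assms(2)] H0proj_H0lift H0proj_in_vsp[OF assms(2)]
  unfolding H0_iso_def by metis

lemma zlinear_H0_iso: "zlinear (H0gen d n r) (bars r) (H0_iso r)"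
  unfolding zlinear_def H0_iso_def
proof (intro conjI ballI)
  fix S T
  assume S: "S \<in> vsp (H0gen d n r)" and T: "T \<in> vsp (H0gen d n r)"
  then show "bar_coords r (H0lift (zadd S T)) = zadd (bar_coords r (H0lift S)) (bar_coords r (H0lift T))"
    using bar_coords_zadd[OF H0lift_in_vsp[OF S] H0lift_in_vsp[OF T]]
    unfolding vsp_def by (simp add: H0lift_zadd)
qed (rule bar_coords_in_vsp[OF H0lift_in_vsp])

lemma bij_betw_H0_iso:
  assumes "0 \<le> r"
  shows "bij_betw (H0_iso r) (vsp (H0gen d n r)) (vsp (bars r))"
  unfolding bij_betw_def
proof
  show "inj_on (H0_iso r) (vsp (H0gen d n r))"
  proof (rule inj_onI)
    fix S T
    assume S: "S \<in> vsp (H0gen d n r)" and T: "T \<in> vsp (H0gen d n r)" and "H0_iso r S = H0_iso r T"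
    then have "bar_coords r (zadd (H0lift S) (H0lift T)) = {}"
      using bar_coords_zadd H0lift_in_vsp unfolding H0_iso_def by (simp add: zadd_eq_empty_iff)
    then have "H0proj d n r (zadd (H0lift S) (H0lift T)) = {}"
      using bar_coords_eq_empty_iff[OF assms zadd_in_vsp] H0lift_in_vsp S T by blast
    then have "zadd S T = {}"
      using H0proj_zadd[of "H0lift S" "H0lift T"] H0lift_in_vsp[OF S] H0lift_in_vsp[OF T]
        H0proj_H0lift[OF S] H0proj_H0lift[OF T] unfolding vsp_def by simp
    then show "S = T"
      by (simp add: zadd_eq_empty_iff)
  qed
  show "H0_iso r ` vsp (H0gen d n r) = vsp (bars r)"
  proof
    show "H0_iso r ` vsp (H0gen d n r) \<subseteq> vsp (bars r)"
      unfolding H0_iso_def using bar_coords_in_vsp H0lift_in_vsp by blast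
    show "vsp (bars r) \<subseteq> H0_iso r ` vsp (H0gen d n r)"
      using bar_coords_surj H0_iso_H0proj[OF assms] H0proj_in_vsp by (metis image_eqI subsetI)
  qed
qed

lemma H0_iso_PH0rho:
  assumes "0 \<le> r" "r \<le> s" "S \<in> vsp (H0gen d n r)"
  shows "H0_iso s (PH0rho d n r s S) = H0_iso r S \<inter> bars s"
proof -
  define v where "v = H0lift S"
  have v: "v \<in> vsp {..<n}" and S_eq: "S = H0proj d n r v"
    using H0lift_in_vsp[OF assms(3)] H0proj_H0lift[OF assms(3)] unfolding v_def by auto
  have "\<forall>i<n. vrcomp d n r i \<subseteq> vrcomp d n s i"
    using vrcomp_mono[OF vredges_mono[OF assms(2)]] by blast
  then have "PH0rho d n r s S = H0proj d n s v"
    unfolding PH0rho_def S_eq by (rule H0map_H0proj[OF v])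
  then show ?thesis
    using H0_iso_H0proj[OF _ v] bar_coords_restrict[OF assms(1,2) v] assms(1,2) S_eq by simp
qed

lemma is_piso_H0_iso: "is_piso (H0gen d n) (PH0rho d n) bars (\<lambda>r s T. T \<inter> bars s) H0_iso"
  unfolding is_piso_def is_pmor_def
  using zlinear_H0_iso bij_betw_H0_iso H0_iso_PH0rho by simp

end

section \<open>The block decomposition\<close>

locale H0_nonexpansive_pair =
  fixes n :: nat and dx dz :: "nat \<Rightarrow> nat \<Rightarrow> real" and B :: "nat set set"
  assumes n_pos: "0 < n"
    and dz_nonneg: "\<forall>i<n. \<forall>j<n. 0 \<le> dz i j"
    and dz_le_dx: "\<forall>i<n. \<forall>j<n. dz i j \<le> dx i j"
    and basis: "zbasis (even_vecs n) B"
    and adapted_dx: "adapted (death_time dx n) B"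
    and adapted_dz: "adapted (death_time dz n) B"
begin

lemma dx_nonneg: "\<forall>i<n. \<forall>j<n. 0 \<le> dx i j"
  using dz_nonneg dz_le_dx by (meson order_trans)

definition block_class :: "real \<Rightarrow> real \<Rightarrow> nat set set" where
  "block_class a b = {w \<in> B. death_time dx n w = a \<and> death_time dz n w = b}"

definition block_rank :: "real \<Rightarrow> real \<Rightarrow> nat set \<Rightarrow> nat" where
  "block_rank a b = (SOME h. bij_betw h (block_class a b) {0..<card (block_class a b)})"

definition block_key :: "nat set \<Rightarrow> real \<times> real \<times> nat" where
  "block_key w = (death_time dx n w, death_time dz n w,
     block_rank (death_time dx n w) (death_time dz n w) w)"

definition block_tag :: "nat set \<Rightarrow> (real \<times> real \<times> nat) option" where
  "block_tag w = (if w = {0} then None else Some (block_key w))"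

lemma bij_betw_block_rank: "bij_betw (block_rank a b) (block_class a b) {0..<card (block_class a b)}"
proof -
  have "finite (block_class a b)"
    using zbasis_finite[OF basis] unfolding block_class_def by simp
  then show ?thesis
    unfolding block_rank_def by (rule someI_ex[OF ex_bij_betw_finite_nat])
qed

lemma death_times_le:
  assumes "w \<in> B"
  shows "0 \<le> death_time dz n w" "death_time dz n w \<le> death_time dx n w"
  using assms zbasis_subset[OF basis] death_time_nonneg[OF dz_nonneg] death_time_mono[OF dz_nonneg dz_le_dx]
  by auto

lemma block_fun_eq_card_class: "0 \<le> a \<Longrightarrow> 0 \<le> b \<Longrightarrow> block_fun dx dz n a b = card (block_class a b)"
  unfolding block_class_def by (rule block_fun_eq_card[OF dx_nonneg dz_nonneg basis adapted_dx adapted_dz])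

lemma inj_on_block_key: "inj_on block_key B"
proof (rule inj_onI)
  fix w1 w2
  assume "w1 \<in> B" "w2 \<in> B" "block_key w1 = block_key w2"
  then have "w1 \<in> block_class (death_time dx n w1) (death_time dz n w1)"
    "w2 \<in> block_class (death_time dx n w1) (death_time dz n w1)"
    "block_rank (death_time dx n w1) (death_time dz n w1) w1
      = block_rank (death_time dx n w1) (death_time dz n w1) w2"
    unfolding block_key_def block_class_def by auto
  then show "w1 = w2"
    using bij_betw_block_rank unfolding bij_betw_def inj_on_def by blast
qed

lemma block_key_image: "block_key ` B = {(a, b, i). 0 \<le> b \<and> b \<le> a \<and> i < block_fun dx dz n a b}"
proof (intro equalityI subsetI)
  fix t
  assume "t \<in> block_key ` B"
  then obtain w where "w \<in> B" "t = block_key w"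
    by blast
  moreover have "w \<in> block_class (death_time dx n w) (death_time dz n w)"
    using \<open>w \<in> B\<close> unfolding block_class_def by simp
  then have "block_rank (death_time dx n w) (death_time dz n w) w
      < card (block_class (death_time dx n w) (death_time dz n w))"
    using bij_betw_apply[OF bij_betw_block_rank] by fastforce
  moreover note death_times_le[OF \<open>w \<in> B\<close>]
  ultimately show "t \<in> {(a, b, i). 0 \<le> b \<and> b \<le> a \<and> i < block_fun dx dz n a b}"
    using block_fun_eq_card_class[of "death_time dx n w" "death_time dz n w"]
    unfolding block_key_def by simp
next
  fix t
  assume "t \<in> {(a, b, i). 0 \<le> b \<and> b \<le> a \<and> i < block_fun dx dz n a b}"
  then obtain a b i where t: "t = (a, b, i)" "0 \<le> b" "b \<le> a" "i < card (block_class a b)"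
    using block_fun_eq_card_class by auto
  then obtain w where "w \<in> block_class a b" "block_rank a b w = i"
    using bij_betw_block_rank unfolding bij_betw_def by (metis atLeastLessThan_iff imageE zero_le)
  then show "t \<in> block_key ` B"
    using t unfolding block_class_def block_key_def by force
qed

lemma inj_on_block_tag: "inj_on block_tag (insert {0} B)"
  using inj_on_block_key unfolding block_tag_def inj_on_def by auto

sublocale X: H0_adapted_basis n dx B block_tag
  using n_pos dx_nonneg basis adapted_dx inj_on_block_tag by unfold_locales

sublocale Z: H0_adapted_basis n dz B block_tag
  using n_pos dz_nonneg basis adapted_dz inj_on_block_tag by unfold_locales

lemma block_tag_image:
  "block_tag ` {w \<in> insert {0} B. w = {0} \<or> P (block_key w)}
    = insert None (Some ` {t. t \<in> {(a, b, i). 0 \<le> b \<and> b \<le> a \<and> i < block_fun dx dz n a b} \<and> P t})"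
proof -
  have "{0} \<notin> B"
    using zbasis_subset[OF basis] singleton_notin_even_vecs by blast
  then have "block_tag ` {w \<in> insert {0} B. w = {0} \<or> P (block_key w)}
      = insert None (Some ` {t \<in> block_key ` B. P t})"
    unfolding block_tag_def by (auto simp: image_iff)
  then show ?thesis
    unfolding block_key_image by simp
qed

lemma blk_dom_eq: "blk_dom (block_fun dx dz n) = X.bars"
proof
  fix r
  show "blk_dom (block_fun dx dz n) r = X.bars r"
    using block_tag_image[of "\<lambda>(a, b, i). ivl a r"]
    unfolding X.bars_def X.alive_def blk_dom_def block_key_def by auto
qed

lemma blk_cod_eq: "blk_cod (block_fun dx dz n) = Z.bars"
proof
  fix r
  show "blk_cod (block_fun dx dz n) r = Z.bars r"
    using block_tag_image[of "\<lambda>(a, b, i). ivl b r"]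
    unfolding Z.bars_def Z.alive_def blk_cod_def block_key_def by auto
qed

lemma alive_dz_imp_alive_dx:
  assumes "w \<in> insert {0} B" "Z.alive r w"
  shows "X.alive r w"
proof (cases "w = {0}")
  case False
  then have "0 \<le> death_time dz n w" "death_time dz n w \<le> death_time dx n w"
    using assms(1) death_times_le by auto
  then show ?thesis
    using assms(2) unfolding Z.alive_def X.alive_def ivl_def by (auto split: if_splits)
qed (simp add: X.alive_def)

lemma bar_coords_dz_eq:
  assumes "v \<in> vsp {..<n}"
  shows "Z.bar_coords r v = X.bar_coords r v \<inter> Z.bars r"
proof -
  have "{w \<in> zcoord (insert {0} B) v. Z.alive r w}
      = {w \<in> zcoord (insert {0} B) v. X.alive r w} \<inter> {w \<in> insert {0} B. Z.alive r w}"
    using X.zcoord_subset[OF assms] alive_dz_imp_alive_dx by blast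
  moreover have "block_tag ` ({w \<in> zcoord (insert {0} B) v. X.alive r w} \<inter> {w \<in> insert {0} B. Z.alive r w})
      = block_tag ` {w \<in> zcoord (insert {0} B) v. X.alive r w} \<inter> Z.bars r"
    unfolding Z.bars_def using X.zcoord_subset[OF assms]
    by (intro inj_on_image_Int[OF inj_on_block_tag]) auto
  ultimately show ?thesis
    unfolding X.bar_coords_def Z.bar_coords_def by simp
qed

lemma H0_iso_H0map:
  assumes "0 \<le> r" "S \<in> vsp (H0gen dx n r)"
  shows "Z.H0_iso r (H0map dz n r S) = blk_mor (block_fun dx dz n) r (X.H0_iso r S)"
proof -
  define v where "v = H0lift S"
  have v: "v \<in> vsp {..<n}" and S_eq: "S = H0proj dx n r v"
    using H0lift_in_vsp[OF assms(2)] H0proj_H0lift[OF assms(2)] unfolding v_def by auto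
  have "\<forall>i<n. vrcomp dx n r i \<subseteq> vrcomp dz n r i"
    using vrcomp_mono[OF vredges_subset_if_le[OF dz_le_dx]] by blast
  then have "Z.H0_iso r (H0map dz n r S) = Z.bar_coords r v"
    unfolding S_eq using H0map_H0proj[OF v] Z.H0_iso_H0proj[OF assms(1) v] by simp
  also have "\<dots> = blk_mor (block_fun dx dz n) r (X.H0_iso r S)"
    unfolding bar_coords_dz_eq[OF v] blk_mor_def blk_cod_eq S_eq X.H0_iso_H0proj[OF assms(1) v] ..
  finally show ?thesis .
qed

end

theorem nonexpansive_H0_pmor_isomorphic_blocks:
  assumes "0 < n" "\<forall>i<n. \<forall>j<n. 0 \<le> dz i j" "\<forall>i<n. \<forall>j<n. dz i j \<le> dx i j"
  shows "pmor_isomorphic (H0gen dx n) (PH0rho dx n) (H0gen dz n) (PH0rho dz n) (H0map dz n)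
    (blk_dom (block_fun dx dz n)) (blk_dom_rho (block_fun dx dz n))
    (blk_cod (block_fun dx dz n)) (blk_cod_rho (block_fun dx dz n)) (blk_mor (block_fun dx dz n))"
proof -
  have "\<forall>i<n. \<forall>j<n. 0 \<le> dx i j"
    using assms(2,3) by (meson order_trans)
  then have "nonarchimedean (even_vecs n) (death_time dx n)" "nonarchimedean (even_vecs n) (death_time dz n)"
    using nonarchimedean_death_time assms(2) by blast+
  moreover have "finite {{i, j} | i j. i < n \<and> j < n \<and> i \<noteq> j}"
    by (rule finite_subset[of _ "Pow {..<n}"]) auto
  ultimately obtain B where "zbasis (even_vecs n) B" "adapted (death_time dx n) B" "adapted (death_time dz n) B"
    using exists_adapted_zbasis unfolding even_vecs_def by blast
  then interpret H0_nonexpansive_pair n dx dz B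
    using assms by unfold_locales
  have rho: "blk_dom_rho (block_fun dx dz n) = (\<lambda>r s T. T \<inter> X.bars s)"
    "blk_cod_rho (block_fun dx dz n) = (\<lambda>r s T. T \<inter> Z.bars s)"
    by (simp_all add: fun_eq_iff blk_dom_rho_def blk_cod_rho_def blk_dom_eq blk_cod_eq)
  show ?thesis
    unfolding pmor_isomorphic_def
  proof (intro exI conjI)
    show "is_piso (H0gen dx n) (PH0rho dx n) (blk_dom (block_fun dx dz n)) (blk_dom_rho (block_fun dx dz n))
      X.H0_iso"
      unfolding blk_dom_eq rho by (rule X.is_piso_H0_iso)
    show "is_piso (H0gen dz n) (PH0rho dz n) (blk_cod (block_fun dx dz n)) (blk_cod_rho (block_fun dx dz n))
      Z.H0_iso"
      unfolding blk_cod_eq rho by (rule Z.is_piso_H0_iso)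
  qed (use H0_iso_H0map in blast)
qed

theorem nonexpansive_H0_block_decomposition:
  assumes "0 < n" "\<forall>i<n. \<forall>j<n. 0 \<le> dz i j" "\<forall>i<n. \<forall>j<n. dz i j \<le> dx i j"
  shows "(\<forall>r\<ge>0. \<forall>i<n. \<forall>j<n. j \<in> vrcomp dx n r i \<longrightarrow> j \<in> vrcomp dz n r i) \<and>
    is_pmor (H0gen dx n) (PH0rho dx n) (H0gen dz n) (PH0rho dz n) (H0map dz n) \<and>
    pmor_isomorphic (H0gen dx n) (PH0rho dx n) (H0gen dz n) (PH0rho dz n) (H0map dz n)
      (blk_dom (block_fun dx dz n)) (blk_dom_rho (block_fun dx dz n))
      (blk_cod (block_fun dx dz n)) (blk_cod_rho (block_fun dx dz n)) (blk_mor (block_fun dx dz n))"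
  using vrcomp_mono[OF vredges_subset_if_le[OF assms(3)]] is_pmor_H0map[OF vredges_subset_if_le[OF assms(3)]]
    nonexpansive_H0_pmor_isomorphic_blocks[OF assms] by blast

theorem lemma2:
  fixes n :: nat and dX dZ :: "nat \<Rightarrow> nat \<Rightarrow> real"
  assumes "n \<ge> 1"
    and "\<forall>i<n. \<forall>j<n. dX i j = dX j i \<and> dX i j \<ge> 0"
    and "\<forall>i<n. \<forall>j<n. dZ i j = dZ j i \<and> dZ i j \<ge> 0"
  shows "\<exists>\<delta>0\<ge>0. \<forall>\<delta>\<ge>\<delta>0.
     (let dXd = (\<lambda>i j. dX i j + \<delta>) in
       (\<forall>r\<ge>0. \<forall>i<n. \<forall>j<n. j \<in> vrcomp dXd n r i \<longrightarrow> j \<in> vrcomp dZ n r i) \<and>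
       is_pmor (H0gen dXd n) (PH0rho dXd n) (H0gen dZ n) (PH0rho dZ n) (\<lambda>r. H0map dZ n r) \<and>
       pmor_isomorphic (H0gen dXd n) (PH0rho dXd n) (H0gen dZ n) (PH0rho dZ n) (\<lambda>r. H0map dZ n r)
         (blk_dom (block_fun dXd dZ n)) (blk_dom_rho (block_fun dXd dZ n))
         (blk_cod (block_fun dXd dZ n)) (blk_cod_rho (block_fun dXd dZ n))
         (blk_mor (block_fun dXd dZ n)))"
proof -
  define \<delta>0 where "\<delta>0 = Max (levels dZ n)"
  have dZ_nonneg: "\<forall>i<n. \<forall>j<n. 0 \<le> dZ i j"
    using assms(3) by simp
  have "0 \<le> \<delta>0" and dZ_le: "\<forall>i<n. \<forall>j<n. dZ i j \<le> \<delta>0"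
    unfolding \<delta>0_def levels_def by (auto intro: Max_ge)
  have nonexpansive: "\<forall>i<n. \<forall>j<n. dZ i j \<le> dX i j + \<delta>" if "\<delta>0 \<le> \<delta>" for \<delta>
    using dZ_le assms(2) that by fastforce
  show ?thesis
    unfolding Let_def using \<open>0 \<le> \<delta>0\<close> assms(1)
    by (intro exI[of _ \<delta>0] conjI allI impI nonexpansive_H0_block_decomposition[OF _ dZ_nonneg nonexpansive])
      simp_all
qed

end
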